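(* Under the assumptions and tuning parameters of Theorem 1 (see context), for every epoch $m=1,\dots,M$ of the VRPG algorithm, with $$\hat x_m:=\arg\min_x\Big\{f(x)+\big\langle x,\bar\nabla f_m(\bar x_m)-\nabla f(\bar x_m)\big\rangle+R(x)\Big\},$$ one has $$\mathbb{E}\|\bar x_{m+1}-\hat x_m\|_2^2\le\frac{\mathbb{E}\|\bar x_m-\hat x_m\|_2^2}{20}.$$
   Context: Let $z\sim\mathbb{P}_0$ be a random element of a measurable space $\mathcal{Z}$, let $f:\mathbb{R}^d\times\mathcal{Z}\to\mathbb{R}$, and write $f(x):=\mathbb{E}_{z\sim\mathbb{P}_0}f(x,z)$. Assumptions: (A1) $f(\cdot)$ is $\mu$-strongly convex and $L$-smooth for some $0<\mu\le L<\infty$. (A2) $R:\mathbb{R}^d\to\mathbb{R}\cup\{+\infty\}$ is proper, convex, lower semicontinuous. (A3) For every $z$, $x\mapsto f(x,z)$ is continuously differentiable with $\|\nabla f(x,z)-\nabla f(y,z)\|_2\le L\|x-y\|_2$; $\mathbb{E}\|\nabla f(x,z)\|_2^2<\infty$ and $\mathbb{E}\nabla f(x,z)=\nabla f(x)$ for all $x$. VRPG algorithm with parameters $M,K,T,\lambda$, deterministic initial point $\bar x_1$, using i.i.d. samples $z_1,z_2,\dots\sim\mathbb{P}_0$: for $m=1,\dots,M$, set $j_m=(m-1)(T+K)$, $\bar\nabla f_m(x):=\frac1T\sum_{i=1}^T\nabla f(x,z_{j_m+i})$, and for $k=1,\dots,K$, $G_{k,m}(x):=\nabla f(x,z_{j_m+T+k})+\bar\nabla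 f_m(\bar x_m)-\nabla f(\bar x_m,z_{j_m+T+k})$. Set $x_0=\bar x_m$, $x_k=\arg\min_y\{\tfrac12\|y-(x_{k-1}-\lambda G_{k,m}(x_{k-1}))\|_2^2+\lambda R(y)\}$ for $k=1,\dots,K$, and $\bar x_{m+1}=x_K$. Tuning parameters: $\lambda=\frac{\mu}{6\cdot 8^2 L^2}$, $K=\frac{\log 120}{\log(1/(1-\mu^2/(6\cdot 8^2 L^2)))}$ (assumed a positive integer), $T$ a positive integer. *)

theory Defs
  imports "HOL-Probability.Probability"
begin

definition strongly_convex :: "real \<Rightarrow> ('v::real_normed_vector \<Rightarrow> real) \<Rightarrow> bool" where
  "strongly_convex \<mu> F \<longleftrightarrow>
     (\<forall>x y. \<forall>t\<in>{0..1}. F ((1 - t) *\<^sub>R x + t *\<^sub>R y)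
        \<le> (1 - t) * F x + t * F y - \<mu> / 2 * t * (1 - t) * (norm (x - y))\<^sup>2)"

definition proper_fun :: "('v \<Rightarrow> ereal) \<Rightarrow> bool" where
  "proper_fun R \<longleftrightarrow> (\<forall>x. R x \<noteq> -\<infinity>) \<and> (\<exists>x. R x < \<infinity>)"

definition convex_ereal_fun :: "('v::real_vector \<Rightarrow> ereal) \<Rightarrow> bool" where
  "convex_ereal_fun R \<longleftrightarrow>
     (\<forall>x y. \<forall>t\<in>{0..1}. R ((1 - t) *\<^sub>R x + t *\<^sub>R y) \<le> ereal (1 - t) * R x + ereal t * R y)"

definition lsc_fun :: "('v::topological_space \<Rightarrow> ereal) \<Rightarrow> bool" where
  "lsc_fun R \<longleftrightarrow> (\<forall>c. closed {x. R x \<le> c})"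

definition argmin_e :: "('v \<Rightarrow> ereal) \<Rightarrow> 'v" where
  "argmin_e \<Phi> = (SOME y. \<forall>u. \<Phi> y \<le> \<Phi> u)"

definition prox :: "real \<Rightarrow> ('v::real_normed_vector \<Rightarrow> ereal) \<Rightarrow> 'v \<Rightarrow> 'v" where
  "prox lam R v = argmin_e (\<lambda>y. ereal ((norm (y - v))\<^sup>2 / 2) + ereal lam * R y)"

(* VRPG. Samples: z_j = \<omega> j for j = 1,2,...; gf x z = gradient of f(.,z) at x *)
definition vrpg_j :: "nat \<Rightarrow> nat \<Rightarrow> nat \<Rightarrow> nat" where
  "vrpg_j T K m = (m - 1) * (T + K)"

definition vrpg_gbar :: "('v::real_vector \<Rightarrow> 'z \<Rightarrow> 'v) \<Rightarrow> nat \<Rightarrow> nat \<Rightarrow> nat \<Rightarrow> (nat \<Rightarrow> 'z) \<Rightarrow> 'v \<Rightarrow> 'v" where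
  "vrpg_gbar gf T K m \<omega> x = (1 / real T) *\<^sub>R (\<Sum>i=1..T. gf x (\<omega> (vrpg_j T K m + i)))"

definition vrpg_G :: "('v::real_vector \<Rightarrow> 'z \<Rightarrow> 'v) \<Rightarrow> nat \<Rightarrow> nat \<Rightarrow> nat \<Rightarrow> nat \<Rightarrow> (nat \<Rightarrow> 'z) \<Rightarrow> 'v \<Rightarrow> 'v \<Rightarrow> 'v" where
  "vrpg_G gf T K m k \<omega> xb x =
     gf x (\<omega> (vrpg_j T K m + T + k)) + vrpg_gbar gf T K m \<omega> xb - gf xb (\<omega> (vrpg_j T K m + T + k))"

fun vrpg_inner :: "('v::real_normed_vector \<Rightarrow> 'z \<Rightarrow> 'v) \<Rightarrow> ('v \<Rightarrow> ereal) \<Rightarrow> real \<Rightarrow> nat \<Rightarrow> nat \<Rightarrow> nat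
    \<Rightarrow> (nat \<Rightarrow> 'z) \<Rightarrow> 'v \<Rightarrow> nat \<Rightarrow> 'v" where
  "vrpg_inner gf R lam T K m \<omega> xb 0 = xb"
| "vrpg_inner gf R lam T K m \<omega> xb (Suc k) =
     (let y = vrpg_inner gf R lam T K m \<omega> xb k
      in prox lam R (y - lam *\<^sub>R vrpg_G gf T K m (Suc k) \<omega> xb y))"

(* epoch points \<bar>x_m, m \<ge> 1; \<bar>x_1 = x1 (index 0 is a dummy, also x1) *)
fun vrpg_xbar :: "('v::real_normed_vector \<Rightarrow> 'z \<Rightarrow> 'v) \<Rightarrow> ('v \<Rightarrow> ereal) \<Rightarrow> real \<Rightarrow> nat \<Rightarrow> nat
    \<Rightarrow> 'v \<Rightarrow> (nat \<Rightarrow> 'z) \<Rightarrow> nat \<Rightarrow> 'v" where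
  "vrpg_xbar gf R lam T K x1 \<omega> 0 = x1"
| "vrpg_xbar gf R lam T K x1 \<omega> (Suc m) =
     (if m = 0 then x1
      else vrpg_inner gf R lam T K m \<omega> (vrpg_xbar gf R lam T K x1 \<omega> m) K)"

end

theory Submission
  imports Defs
begin

text \<open>Write \<open>e = gbar_m(xbar_m) - gradF(xbar_m)\<close> for the bias of the anchor gradient. The target
  \<open>xhat_m\<close> minimizes \<open>F + \<langle>-, e\<rangle> + R\<close>, so it is a fixed point of the proximal gradient step for this
  tilted objective, \<open>xhat_m = prox (xhat_m - lam (gradF xhat_m + e))\<close>. The inner steps of epoch m use
  the direction \<open>G_{k,m}(x_{k-1})\<close>, whose mean over the fresh sample is exactly \<open>gradF x_{k-1} + e\<close>.
  Nonexpansiveness of prox, strong monotonicity of gradF and the Lipschitz bounds therefore give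
  \<open>E|x_k - xhat_m|\<^sup>2 \<le> (1 - lam \<mu>) E|x_{k-1} - xhat_m|\<^sup>2 + 8 lam\<^sup>2 L\<^sup>2 E|x_0 - xhat_m|\<^sup>2\<close>.
  Unrolling K steps, the tuning makes the total factor \<open>1/120 + 1/48 \<le> 1/20\<close>.\<close>

section \<open>Proper convex lower semicontinuous extended-real functions\<close>

lemma le_of_forall_unit_le_add_mult:
  fixes a b c :: real
  assumes "\<And>t. 0 < t \<Longrightarrow> t \<le> 1 \<Longrightarrow> a \<le> b + t * c"
  shows "a \<le> b"
proof (rule ccontr)
  assume "\<not> a \<le> b"
  then have ab: "a > b" by simp
  show False
  proof (cases "c \<le> 0")
    case True
    then show ?thesis using assms[of 1] ab by simp
  next
    case False
    define t where "t = min 1 ((a - b) / (2 * c))"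
    have t: "0 < t" "t \<le> 1" using False ab by (auto simp: t_def)
    have "t * c \<le> (a - b) / (2 * c) * c" using False by (intro mult_right_mono) (auto simp: t_def)
    also have "\<dots> = (a - b) / 2" using False by (simp add: field_simps)
    finally show False using assms[OF t] ab by (simp add: field_simps)
  qed
qed

lemma proper_fun_realE:
  assumes "proper_fun Q" "Q x \<noteq> \<infinity>"
  obtains r where "Q x = ereal r"
  using assms unfolding proper_fun_def by (cases "Q x") auto

lemma proper_fun_dom_nonemptyE:
  assumes "proper_fun Q"
  obtains x r where "Q x = ereal r"
proof -
  obtain x where "Q x < \<infinity>" using assms unfolding proper_fun_def by blast
  then have "Q x \<noteq> \<infinity>" by simp
  then show ?thesis using proper_fun_realE[OF assms] that by metis
qed

lemma lsc_fun_bounded_below_on_compact: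
  fixes Q :: "'v::metric_space \<Rightarrow> ereal"
  assumes ls: "lsc_fun Q" and fin: "\<And>x. Q x \<noteq> - \<infinity>" and S: "compact S"
  obtains n :: nat where "\<And>y. y \<in> S \<Longrightarrow> ereal (- real n) < Q y"
proof -
  have "\<exists>n::nat. \<forall>y\<in>S. ereal (- real n) < Q y"
  proof (rule ccontr)
    assume "\<not> ?thesis"
    then have "\<forall>n. \<exists>y\<in>S. Q y \<le> ereal (- real n)" using not_less by blast
    then obtain f where f: "\<And>n. f n \<in> S" "\<And>n. Q (f n) \<le> ereal (- real n)" by metis
    obtain l r where l: "l \<in> S" "strict_mono r" "(f \<circ> r) \<longlonglongrightarrow> l"
      using seq_compactE[OF compact_imp_seq_compact[OF S]] f(1) by metis
    have below: "Q l \<le> ereal (- real N)" for N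
    proof -
      have "(\<lambda>n. (f \<circ> r) (n + N)) \<longlonglongrightarrow> l" using LIMSEQ_ignore_initial_segment[OF l(3)] .
      moreover have "(f \<circ> r) (n + N) \<in> {x. Q x \<le> ereal (- real N)}" for n
      proof -
        have "N \<le> r (n + N)" using seq_suble[OF l(2), of "n+N"] by simp
        then have "ereal (- real (r (n + N))) \<le> ereal (- real N)" by simp
        from order_trans[OF f(2)[of "r (n+N)"] this] show ?thesis by simp
      qed
      moreover have "closed {x. Q x \<le> ereal (- real N)}" using ls unfolding lsc_fun_def by blast
      ultimately show ?thesis
        using closed_sequentially[of "{x. Q x \<le> ereal (- real N)}" "\<lambda>n. (f \<circ> r) (n + N)" l] by blast
    qed
    show False
    proof (cases "Q l")
      case (real ql)
      obtain N :: nat where "- ql < real N" using reals_Archimedean2 by blast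
      then show False using below[of N] real by simp
    qed (use below[of 0] fin[of l] in simp_all)
  qed
  then show ?thesis using that by blast
qed

lemma convex_ereal_fun_lower_bound_outside_ball:
  fixes Q :: "'v::real_normed_vector \<Rightarrow> ereal"
  assumes cv: "convex_ereal_fun Q" and pr: "proper_fun Q" and x0: "Q x0 = ereal r0"
    and ball: "\<And>z. z \<in> cball x0 1 \<Longrightarrow> ereal (- b) < Q z"
    and far: "1 < norm (y - x0)"
  shows "ereal (- (b + \<bar>r0\<bar>) * norm (y - x0)) \<le> Q y"
proof (cases "Q y = \<infinity>")
  case False
  then obtain qy where qy: "Q y = ereal qy" using proper_fun_realE[OF pr] by blast
  define D where "D = norm (y - x0)"
  have D1: "D > 1" using far D_def by simp
  define t where "t = 1 / D"
  have t: "0 < t" "t < 1" using D1 by (auto simp: t_def)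
  \<comment> \<open>the point of the segment from x0 to y on the unit sphere around x0\<close>
  define z where "z = (1 - t) *\<^sub>R x0 + t *\<^sub>R y"
  have "z - x0 = t *\<^sub>R (y - x0)" by (simp add: z_def algebra_simps)
  moreover have "y \<noteq> x0" using D1 D_def by force
  ultimately have "norm (z - x0) = 1" by (simp add: t_def D_def)
  then have "ereal (- b) < Q z" by (intro ball) (simp add: dist_norm norm_minus_commute)
  also have "Q z \<le> ereal (1 - t) * Q x0 + ereal t * Q y"
    using cv t unfolding convex_ereal_fun_def z_def by simp
  also have "\<dots> = ereal ((1 - t) * r0 + t * qy)" by (simp add: x0 qy)
  finally have "- b * D < ((1 - t) * r0 + t * qy) * D" using D1 by (intro mult_strict_right_mono) simp_all
  also have "\<dots> = (D - 1) * r0 + qy" using D1 by (simp add: t_def field_simps)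
  finally have "- b * D - (D - 1) * r0 < qy" by simp
  moreover have "(D - 1) * r0 \<le> (D - 1) * \<bar>r0\<bar>" using D1 by (intro mult_left_mono) simp_all
  moreover have "(D - 1) * \<bar>r0\<bar> \<le> D * \<bar>r0\<bar>" by (simp add: mult_right_mono)
  ultimately have "- (b + \<bar>r0\<bar>) * D \<le> qy" by (simp add: algebra_simps)
  then show ?thesis by (simp add: qy D_def)
qed simp

lemma proper_convex_lsc_linear_minorant:
  fixes Q :: "'v::euclidean_space \<Rightarrow> ereal"
  assumes pr: "proper_fun Q" and cv: "convex_ereal_fun Q" and ls: "lsc_fun Q"
  obtains A where "\<And>y. ereal (- A - A * norm y) \<le> Q y"
proof -
  obtain x0 r0 where r0: "Q x0 = ereal r0" using proper_fun_dom_nonemptyE[OF pr] .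
  obtain n :: nat where n: "\<And>y. y \<in> cball x0 1 \<Longrightarrow> ereal (- real n) < Q y"
    using lsc_fun_bounded_below_on_compact[OF ls _ compact_cball] pr unfolding proper_fun_def by blast
  define A where "A = (n + \<bar>r0\<bar>) * (1 + norm x0)"
  have A_ge: "n \<le> A" "n + \<bar>r0\<bar> \<le> A" "(n + \<bar>r0\<bar>) * norm x0 \<le> A"
    unfolding A_def by (auto simp: algebra_simps)
  have "ereal (- A - A * norm y) \<le> Q y" for y
  proof (cases "norm (y - x0) \<le> 1")
    case True
    then have "ereal (- real n) < Q y" by (intro n) (simp add: dist_norm norm_minus_commute)
    moreover have "0 \<le> A * norm y" using A_ge(1) by (simp add: order_trans[OF of_nat_0_le_iff])
    ultimately show ?thesis using A_ge(1) by (smt (verit) ereal_less_eq(3) order_less_imp_le order_trans)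
  next
    case False
    have "norm (y - x0) \<le> norm y + norm x0" by (rule norm_triangle_ineq4)
    then have "(n + \<bar>r0\<bar>) * norm (y - x0) \<le> (n + \<bar>r0\<bar>) * norm y + (n + \<bar>r0\<bar>) * norm x0"
      by (simp add: mult_left_mono distrib_left[symmetric])
    also have "\<dots> \<le> A * norm y + A" using A_ge(2,3) by (intro add_mono mult_right_mono) simp_all
    finally have "ereal (- A - A * norm y) \<le> ereal (- (real n + \<bar>r0\<bar>) * norm (y - x0))"
      by (simp add: algebra_simps)
    also have "\<dots> \<le> Q y"
      using convex_ereal_fun_lower_bound_outside_ball[OF cv pr r0 n] False by simp
    finally show ?thesis .
  qed
  then show ?thesis by (rule that)
qed

lemma proper_fun_PInf_or_real:
  assumes "proper_fun R"
  shows "R x = \<infinity> \<or> (\<exists>r. R x = ereal r)"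
  using assms unfolding proper_fun_def by (cases "R x") auto

lemma proper_fun_scale:
  assumes lam: "lam > 0" and pr: "proper_fun R"
  shows "proper_fun (\<lambda>x. ereal lam * R x)"
  unfolding proper_fun_def
proof safe
  fix x assume "ereal lam * R x = - \<infinity>"
  then show False using proper_fun_PInf_or_real[OF pr, of x] lam by auto
next
  obtain x r where "R x = ereal r" using proper_fun_dom_nonemptyE[OF pr] .
  then show "\<exists>x. ereal lam * R x < \<infinity>" by (intro exI[of _ x]) simp
qed

lemma convex_ereal_fun_scale:
  assumes lam: "lam > 0" and pr: "proper_fun R" and cv: "convex_ereal_fun R"
  shows "convex_ereal_fun (\<lambda>x. ereal lam * R x)"
  unfolding convex_ereal_fun_def
proof (intro allI ballI)
  note fin = proper_fun_PInf_or_real[OF pr]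
  fix x y t assume t: "(t::real) \<in> {0..1}"
  have "ereal lam * R ((1 - t) *\<^sub>R x + t *\<^sub>R y) \<le> ereal lam * (ereal (1 - t) * R x + ereal t * R y)"
    using cv t lam unfolding convex_ereal_fun_def by (intro ereal_mult_left_mono) simp_all
  also have "\<dots> = ereal (1 - t) * (ereal lam * R x) + ereal t * (ereal lam * R y)"
  proof -
    have "ereal (1 - t) * R x \<noteq> - \<infinity>" using fin[of x] t by (cases "t = 1") auto
    moreover have "ereal t * R y \<noteq> - \<infinity>" using fin[of y] t by (cases "t = 0") auto
    ultimately have "ereal lam * (ereal (1 - t) * R x + ereal t * R y)
        = ereal lam * (ereal (1 - t) * R x) + ereal lam * (ereal t * R y)"
      by (intro ereal_distrib_left) auto
    then show ?thesis by (simp add: ac_simps)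
  qed
  finally show "ereal lam * R ((1 - t) *\<^sub>R x + t *\<^sub>R y) \<le> ereal (1 - t) * (ereal lam * R x) + ereal t * (ereal lam * R y)" .
qed

lemma lsc_fun_scale:
  assumes lam: "lam > 0" and pr: "proper_fun R" and ls: "lsc_fun R"
  shows "lsc_fun (\<lambda>x. ereal lam * R x)"
  unfolding lsc_fun_def
proof
  note fin = proper_fun_PInf_or_real[OF pr]
  fix c :: ereal
  show "closed {x. ereal lam * R x \<le> c}"
  proof (cases c)
    case (real r)
    have "{x. ereal lam * R x \<le> c} = {x. R x \<le> ereal (r / lam)}"
    proof (intro Collect_cong iffI)
      fix x assume "ereal lam * R x \<le> c"
      then show "R x \<le> ereal (r / lam)" using fin[of x] lam real by (auto simp: field_simps)
    next
      fix x assume "R x \<le> ereal (r / lam)"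
      then show "ereal lam * R x \<le> c" using fin[of x] lam real by (auto simp: field_simps)
    qed
    then show ?thesis using ls unfolding lsc_fun_def by simp
  next
    case MInf
    have "ereal lam * R x \<noteq> - \<infinity>" for x using fin[of x] lam by auto
    then have "{x. ereal lam * R x \<le> c} = {}" using MInf by simp
    then show ?thesis by simp
  qed simp
qed

lemma quadratic_le_imp_bounded:
  fixes c B C V r :: real
  assumes c: "0 < c" and le: "c * r\<^sup>2 - B * r - C \<le> V"
  shows "r \<le> max 1 ((\<bar>V + C\<bar> + \<bar>B\<bar>) / c)"
proof (rule ccontr)
  assume "\<not> ?thesis"
  then have r1: "r > 1" and r2: "r > (\<bar>V + C\<bar> + \<bar>B\<bar>) / c" by auto
  have "c * r * r \<le> V + C + B * r" using le by (simp add: power2_eq_square)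
  also have "\<dots> \<le> (\<bar>V + C\<bar> + \<bar>B\<bar>) * r"
  proof -
    have "V + C \<le> \<bar>V + C\<bar> * r" using r1
      by (smt (verit) abs_ge_self abs_ge_zero mult_le_cancel_left1)
    moreover have "B * r \<le> \<bar>B\<bar> * r" using r1 by (simp add: mult_right_mono)
    ultimately show ?thesis by (simp add: distrib_right)
  qed
  finally have "c * r \<le> \<bar>V + C\<bar> + \<bar>B\<bar>" using r1 by simp
  then show False using r2 c by (simp add: field_simps)
qed

lemma lsc_plus_continuous_le_of_minimizing_seq:
  fixes G :: "'v::metric_space \<Rightarrow> real" and Q :: "'v \<Rightarrow> ereal"
  assumes Gc: "continuous_on UNIV G" and ls: "lsc_fun Q" and fin: "\<And>x. Q x \<noteq> - \<infinity>"
    and lim: "ys \<longlonglongrightarrow> p" and le: "\<And>n. ereal (G (ys n)) + Q (ys n) \<le> ereal (v + 1 / Suc n)"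
  shows "ereal (G p) + Q p \<le> ereal v"
proof -
  have Gconv: "(\<lambda>n. G (ys n)) \<longlonglongrightarrow> G p"
    using continuous_on_tendsto_compose[OF Gc lim] by simp
  have key: "Q p \<le> ereal (v + 2 * e - G p)" if e: "e > 0" for e
  proof -
    obtain N0 :: nat where N0: "1 / Suc N0 < e"
      using reals_Archimedean[OF e] by (auto simp: inverse_eq_divide)
    obtain N1 where N1: "\<And>n. n \<ge> N1 \<Longrightarrow> G p - e < G (ys n)"
      using order_tendstoD(1)[OF Gconv, of "G p - e"] e unfolding eventually_sequentially by auto
    define N where "N = max N0 N1"
    have "ys (n + N) \<in> {x. Q x \<le> ereal (v + 2 * e - G p)}" for n
    proof -
      have "1 / real (Suc (n + N)) \<le> 1 / Suc N0" by (simp add: N_def frac_le)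
      then have "ereal (G (ys (n + N))) + Q (ys (n + N)) \<le> ereal (v + e)"
        using le[of "n + N"] N0 by (smt (verit) ereal_less_eq(3) order_trans)
      moreover have "G p - e < G (ys (n + N))" using N1[of "n + N"] by (simp add: N_def)
      ultimately show ?thesis by (cases "Q (ys (n + N))") auto
    qed
    moreover have "closed {x. Q x \<le> ereal (v + 2 * e - G p)}" using ls unfolding lsc_fun_def by blast
    moreover have "(\<lambda>n. ys (n + N)) \<longlonglongrightarrow> p" using LIMSEQ_ignore_initial_segment[OF lim] .
    ultimately show ?thesis using closed_sequentially[of _ "\<lambda>n. ys (n + N)" p] by blast
  qed
  obtain qp where qp: "Q p = ereal qp" using key[of 1] fin[of p] by (cases "Q p") auto
  have "G p + qp \<le> v"
  proof (rule field_le_epsilon)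
    fix e :: real assume "0 < e"
    then show "G p + qp \<le> v + e" using key[of "e / 2"] qp by simp
  qed
  then show ?thesis by (simp add: qp)
qed

lemma exists_minimizer_coercive_plus_lsc:
  fixes G :: "'v::euclidean_space \<Rightarrow> real" and Q :: "'v \<Rightarrow> ereal"
  assumes Gc: "continuous_on UNIV G" and c: "c > 0"
    and Glow: "\<And>y. c * (norm y)\<^sup>2 - b * norm y - a \<le> G y"
    and pr: "proper_fun Q" and cv: "convex_ereal_fun Q" and ls: "lsc_fun Q"
  shows "\<exists>p. \<forall>u. ereal (G p) + Q p \<le> ereal (G u) + Q u"
proof -
  obtain A where A: "\<And>y. ereal (- A - A * norm y) \<le> Q y"
    using proper_convex_lsc_linear_minorant[OF pr cv ls] by blast
  obtain x0 q0 where q0: "Q x0 = ereal q0" using proper_fun_dom_nonemptyE[OF pr] .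
  define \<Psi> where "\<Psi> y = ereal (G y) + Q y" for y
  define B where "B = b + A"
  define C where "C = a + A"
  have low: "ereal (c * (norm y)\<^sup>2 - B * norm y - C) \<le> \<Psi> y" for y
  proof -
    have "ereal (c * (norm y)\<^sup>2 - B * norm y - C) = ereal (c * (norm y)\<^sup>2 - b * norm y - a) + ereal (- A - A * norm y)"
      by (simp add: B_def C_def algebra_simps)
    also have "\<dots> \<le> \<Psi> y" unfolding \<Psi>_def using Glow[of y] A[of y] by (intro add_mono) simp_all
    finally show ?thesis .
  qed
  have "- (B\<^sup>2 / (4 * c)) \<le> c * (norm y)\<^sup>2 - B * norm y" for y
    using zero_le_power2[of "2 * c * norm y - B"] c by (simp add: field_simps power2_eq_square)
  then have bounded_below: "ereal (- (B\<^sup>2 / (4 * c)) - C) \<le> \<Psi> y" for y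
    using low[of y] by (smt (verit) ereal_less_eq(3) order_trans)
  define m where "m = Inf (range \<Psi>)"
  have m_le: "m \<le> \<Psi> u" for u unfolding m_def by (rule Inf_lower) simp
  obtain mr where mr: "m = ereal mr" and mr_le: "mr \<le> G x0 + q0"
  proof -
    have "m \<le> ereal (G x0 + q0)" using m_le[of x0] by (simp add: \<Psi>_def q0)
    moreover have "ereal (- (B\<^sup>2 / (4 * c)) - C) \<le> m"
      unfolding m_def using bounded_below by (auto intro: Inf_greatest)
    ultimately show ?thesis using that by (cases m) auto
  qed
  have "\<exists>y. \<Psi> y < ereal (mr + 1 / Suc n)" for n
  proof -
    have "m < ereal (mr + 1 / Suc n)" using mr by simp
    then show ?thesis unfolding m_def Inf_less_iff by blast
  qed
  then obtain ys where ys: "\<And>n. \<Psi> (ys n) < ereal (mr + 1 / Suc n)" by metis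
  have "norm (ys n) \<le> max 1 ((\<bar>(G x0 + q0 + 1) + C\<bar> + \<bar>B\<bar>) / c)" for n
  proof (rule quadratic_le_imp_bounded[OF c])
    have "1 / real (Suc n) \<le> 1" by simp
    then have "ereal (c * (norm (ys n))\<^sup>2 - B * norm (ys n) - C) \<le> ereal (G x0 + q0 + 1)"
      using order_trans[OF low less_imp_le[OF ys[of n]]] mr_le by (smt (verit) ereal_less_eq(3) order_trans)
    then show "c * (norm (ys n))\<^sup>2 - B * norm (ys n) - C \<le> G x0 + q0 + 1" by simp
  qed
  then have "bounded (range ys)" by (auto simp: bounded_iff)
  then obtain p r where r: "strict_mono r" "(ys \<circ> r) \<longlonglongrightarrow> p"
    using bounded_imp_convergent_subsequence by blast
  have "\<Psi> p \<le> ereal mr" unfolding \<Psi>_def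
  proof (rule lsc_plus_continuous_le_of_minimizing_seq[OF Gc ls _ r(2)])
    show "Q x \<noteq> - \<infinity>" for x using pr unfolding proper_fun_def by blast
    fix n
    have "1 / real (Suc (r n)) \<le> 1 / Suc n" using seq_suble[OF r(1), of n] by (simp add: frac_le)
    then show "ereal (G ((ys \<circ> r) n)) + Q ((ys \<circ> r) n) \<le> ereal (mr + 1 / Suc n)"
      using ys[of "r n"] unfolding \<Psi>_def by (smt (verit) comp_apply ereal_less_eq(3) order_less_imp_le order_trans)
  qed
  then show ?thesis using m_le mr unfolding \<Psi>_def by (metis order_trans)
qed

lemma strongly_convex_minimizer_quadratic_growth:
  fixes G :: "'v::euclidean_space \<Rightarrow> real" and Q :: "'v \<Rightarrow> ereal"
  assumes sc: "strongly_convex c G" and pr: "proper_fun Q" and cv: "convex_ereal_fun Q"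
    and min: "\<And>u. ereal (G p) + Q p \<le> ereal (G u) + Q u"
  shows "Q p \<noteq> \<infinity>" and "ereal (G p) + Q p + ereal (c / 2 * (norm (y - p))\<^sup>2) \<le> ereal (G y) + Q y"
proof -
  obtain x0 q0 where q0: "Q x0 = ereal q0" using proper_fun_dom_nonemptyE[OF pr] .
  show pfin: "Q p \<noteq> \<infinity>"
    using min[of x0] q0 by auto
  then obtain qp where qp: "Q p = ereal qp" using proper_fun_realE[OF pr] by blast
  show "ereal (G p) + Q p + ereal (c / 2 * (norm (y - p))\<^sup>2) \<le> ereal (G y) + Q y"
  proof (cases "Q y = \<infinity>")
    case False
    then obtain qy where qy: "Q y = ereal qy" using proper_fun_realE[OF pr] by blast
    define d where "d = (norm (y - p))\<^sup>2"
    \<comment> \<open>compare p with the points (1 - t) p + t y of the segment and let t tend to 0\<close>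
    have "G p + qp + c / 2 * d \<le> G y + qy"
    proof (rule le_of_forall_unit_le_add_mult[where c = "c / 2 * d"])
      fix t :: real assume t: "0 < t" "t \<le> 1"
      define z where "z = (1 - t) *\<^sub>R p + t *\<^sub>R y"
      have t01: "t \<in> {0..1}" using t by simp
      have "Q z \<le> ereal (1 - t) * Q p + ereal t * Q y"
        using cv t01 unfolding convex_ereal_fun_def z_def by blast
      then have Qz: "Q z \<le> ereal ((1 - t) * qp + t * qy)" by (simp add: qp qy)
      then have "Q z \<noteq> \<infinity>" by auto
      then obtain qz where qz: "Q z = ereal qz" using proper_fun_realE[OF pr] by blast
      have Gz: "G z \<le> (1 - t) * G p + t * G y - c / 2 * t * (1 - t) * d"
        using sc t01 unfolding strongly_convex_def z_def d_def by (simp add: norm_minus_commute)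
      have "G p + qp \<le> G z + qz" using min[of z] by (simp add: qp qz)
      also have "\<dots> \<le> (1 - t) * G p + t * G y - c / 2 * t * (1 - t) * d + ((1 - t) * qp + t * qy)"
        using Gz Qz qz by simp
      finally have "t * (G p + qp) \<le> t * (G y + qy - c / 2 * (1 - t) * d)" by (simp add: algebra_simps)
      then have "G p + qp \<le> G y + qy - c / 2 * (1 - t) * d" using t by simp
      moreover have "c / 2 * (1 - t) * d = c / 2 * d - t * (c / 2 * d)" by (simp add: field_simps)
      ultimately show "G p + qp + c / 2 * d \<le> G y + qy + t * (c / 2 * d)" by linarith
    qed
    then show ?thesis by (simp add: qp qy d_def)
  qed (simp add: qp)
qed

lemma strongly_convex_minimizers_dist_le:
  fixes G1 G2 :: "'v::euclidean_space \<Rightarrow> real" and Q :: "'v \<Rightarrow> ereal"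
  assumes sc1: "strongly_convex c G1" and sc2: "strongly_convex c G2"
    and pr: "proper_fun Q" and cv: "convex_ereal_fun Q"
    and min1: "\<And>u. ereal (G1 p1) + Q p1 \<le> ereal (G1 u) + Q u"
    and min2: "\<And>u. ereal (G2 p2) + Q p2 \<le> ereal (G2 u) + Q u"
  shows "c * (norm (p1 - p2))\<^sup>2 \<le> (G1 p2 - G2 p2) - (G1 p1 - G2 p1)"
proof -
  note growth1 = strongly_convex_minimizer_quadratic_growth[OF sc1 pr cv min1]
    and growth2 = strongly_convex_minimizer_quadratic_growth[OF sc2 pr cv min2]
  obtain q1 where q1: "Q p1 = ereal q1" using growth1(1) proper_fun_realE[OF pr] by blast
  obtain q2 where q2: "Q p2 = ereal q2" using growth2(1) proper_fun_realE[OF pr] by blast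
  show ?thesis
    using growth1(2)[of p2] growth2(2)[of p1] by (simp add: q1 q2 norm_minus_commute)
qed

section \<open>Strongly convex differentiable functions\<close>

lemma strongly_convex_half_dist_sq: "strongly_convex 1 (\<lambda>y::'v::real_inner. (norm (y - v))\<^sup>2 / 2)"
  unfolding strongly_convex_def
proof (intro allI ballI)
  fix x y :: 'v and t :: real
  have "(norm ((1 - t) *\<^sub>R (x - v) + t *\<^sub>R (y - v)))\<^sup>2
      = (1 - t) * (norm (x - v))\<^sup>2 + t * (norm (y - v))\<^sup>2 - t * (1 - t) * (norm ((x - v) - (y - v)))\<^sup>2"
    unfolding power2_norm_eq_inner
    by (simp add: inner_add_left inner_add_right inner_diff_left inner_diff_right inner_commute algebra_simps)
  moreover have "(1 - t) *\<^sub>R x + t *\<^sub>R y - v = (1 - t) *\<^sub>R (x - v) + t *\<^sub>R (y - v)"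
    by (simp add: algebra_simps)
  ultimately show "(norm ((1 - t) *\<^sub>R x + t *\<^sub>R y - v))\<^sup>2 / 2
         \<le> (1 - t) * ((norm (x - v))\<^sup>2 / 2) + t * ((norm (y - v))\<^sup>2 / 2) - 1 / 2 * t * (1 - t) * (norm (x - y))\<^sup>2"
    by (simp add: field_simps)
qed

lemma strongly_convex_add_inner:
  assumes "strongly_convex \<mu> F"
  shows "strongly_convex \<mu> (\<lambda>x. F x + x \<bullet> e)"
  using assms unfolding strongly_convex_def
  by (simp add: inner_add_left algebra_simps)

lemma has_derivative_difference_quotient_at_right:
  fixes F :: "'v::real_inner \<Rightarrow> real"
  assumes "(F has_derivative (\<lambda>h. g \<bullet> h)) (at x)"
  shows "((\<lambda>t. (F (x + t *\<^sub>R d) - F x) / t) \<longlongrightarrow> g \<bullet> d) (at_right 0)"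
proof -
  have "((\<lambda>t. x + t *\<^sub>R d) has_derivative (\<lambda>t. t *\<^sub>R d)) (at 0)"
    by (auto intro!: derivative_eq_intros)
  moreover have "(F has_derivative (\<lambda>h. g \<bullet> h)) (at (x + 0 *\<^sub>R d))" using assms by simp
  ultimately have "((\<lambda>t. F (x + t *\<^sub>R d)) has_derivative (\<lambda>t. g \<bullet> (t *\<^sub>R d))) (at 0)"
    by (rule has_derivative_compose)
  moreover have "(\<lambda>t. g \<bullet> (t *\<^sub>R d)) = (*) (g \<bullet> d)" by (auto simp: fun_eq_iff)
  ultimately have "((\<lambda>t. F (x + t *\<^sub>R d)) has_field_derivative (g \<bullet> d)) (at 0)"
    by (simp add: has_field_derivative_def)
  then have "((\<lambda>t. (F (x + t *\<^sub>R d) - F x) / t) \<longlongrightarrow> g \<bullet> d) (at 0)"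
    unfolding has_field_derivative_iff by simp
  then show ?thesis by (rule tendsto_mono[OF at_le, rotated]) simp
qed

lemma strongly_convex_first_order:
  fixes F :: "'v::real_inner \<Rightarrow> real"
  assumes sc: "strongly_convex \<mu> F" and der: "(F has_derivative (\<lambda>h. g \<bullet> h)) (at x)"
  shows "F x + g \<bullet> (y - x) + \<mu> / 2 * (norm (y - x))\<^sup>2 \<le> F y"
proof -
  define d where "d = y - x"
  have lim: "((\<lambda>t. F y - F x - \<mu> / 2 * (1 - t) * (norm d)\<^sup>2) \<longlongrightarrow> F y - F x - \<mu> / 2 * (1 - 0) * (norm d)\<^sup>2) (at_right 0)"
    by (intro tendsto_intros)
  have ev: "\<forall>\<^sub>F t in at_right 0. (F (x + t *\<^sub>R d) - F x) / t \<le> F y - F x - \<mu> / 2 * (1 - t) * (norm d)\<^sup>2"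
    using eventually_at_right_real[of 0 1, OF zero_less_one]
  proof (rule eventually_mono)
    fix t :: real assume t: "t \<in> {0<..<1}"
    have "x + t *\<^sub>R d = (1 - t) *\<^sub>R x + t *\<^sub>R y" by (simp add: d_def algebra_simps)
    then have "F (x + t *\<^sub>R d) \<le> (1 - t) * F x + t * F y - \<mu> / 2 * t * (1 - t) * (norm (x - y))\<^sup>2"
      using sc t unfolding strongly_convex_def by simp
    then have "F (x + t *\<^sub>R d) - F x \<le> t * (F y - F x - \<mu> / 2 * (1 - t) * (norm d)\<^sup>2)"
      by (simp add: d_def norm_minus_commute algebra_simps)
    then show "(F (x + t *\<^sub>R d) - F x) / t \<le> F y - F x - \<mu> / 2 * (1 - t) * (norm d)\<^sup>2"
      using t by (simp add: divide_le_eq mult.commute)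
  qed
  have "g \<bullet> d \<le> F y - F x - \<mu> / 2 * (1 - 0) * (norm d)\<^sup>2"
    by (rule tendsto_le[OF trivial_limit_at_right_real lim has_derivative_difference_quotient_at_right[OF der] ev])
  then show ?thesis by (simp add: d_def)
qed

lemma strongly_convex_gradient_strongly_monotone:
  fixes F :: "'v::real_inner \<Rightarrow> real"
  assumes sc: "strongly_convex \<mu> F" and der: "\<And>x. (F has_derivative (\<lambda>h. gradF x \<bullet> h)) (at x)"
  shows "\<mu> * (norm (a - b))\<^sup>2 \<le> (a - b) \<bullet> (gradF a - gradF b)"
proof -
  have "gradF a \<bullet> (b - a) + gradF b \<bullet> (a - b) = - ((a - b) \<bullet> (gradF a - gradF b))"
    by (simp add: inner_diff_left inner_diff_right inner_commute algebra_simps)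
  then show ?thesis
    using strongly_convex_first_order[OF sc der, of a b] strongly_convex_first_order[OF sc der, of b a]
    by (simp add: norm_minus_commute)
qed

section \<open>The proximal map\<close>

lemma prox_minimizes:
  fixes R :: "'v::euclidean_space \<Rightarrow> ereal"
  assumes lam: "lam > 0" and pr: "proper_fun R" and cv: "convex_ereal_fun R" and ls: "lsc_fun R"
  shows "ereal ((norm (prox lam R v - v))\<^sup>2 / 2) + ereal lam * R (prox lam R v)
           \<le> ereal ((norm (u - v))\<^sup>2 / 2) + ereal lam * R u"
proof -
  have cont: "continuous_on UNIV (\<lambda>y::'v. (norm (y - v))\<^sup>2 / 2)" by (intro continuous_intros) auto
  have low: "1/2 * (norm y)\<^sup>2 - norm v * norm y - 0 \<le> (norm (y - v))\<^sup>2 / 2" for y :: 'v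
  proof -
    have "(norm (y - v))\<^sup>2 = (norm y)\<^sup>2 - 2 * (y \<bullet> v) + (norm v)\<^sup>2"
      unfolding power2_norm_eq_inner by (simp add: inner_diff_left inner_diff_right inner_commute)
    moreover have "y \<bullet> v \<le> norm y * norm v" by (rule norm_cauchy_schwarz)
    moreover have "0 \<le> (norm v)\<^sup>2" by simp
    moreover have "norm v * norm y = norm y * norm v" by (rule mult.commute)
    ultimately show ?thesis by linarith
  qed
  from exists_minimizer_coercive_plus_lsc[OF cont _ low proper_fun_scale[OF lam pr]
      convex_ereal_fun_scale[OF lam pr cv] lsc_fun_scale[OF lam pr ls]]
  have "\<exists>p. \<forall>u. ereal ((norm (p - v))\<^sup>2 / 2) + ereal lam * R p \<le> ereal ((norm (u - v))\<^sup>2 / 2) + ereal lam * R u"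
    by simp
  from someI_ex[OF this] show ?thesis unfolding prox_def argmin_e_def by blast
qed

lemma prox_nonexpansive:
  fixes R :: "'v::euclidean_space \<Rightarrow> ereal"
  assumes lam: "lam > 0" and pr: "proper_fun R" and cv: "convex_ereal_fun R" and ls: "lsc_fun R"
  shows "norm (prox lam R v - prox lam R w) \<le> norm (v - w)"
proof -
  let ?p = "prox lam R v" and ?q = "prox lam R w"
  have "1 * (norm (?p - ?q))\<^sup>2 \<le> ((norm (?q - v))\<^sup>2 / 2 - (norm (?q - w))\<^sup>2 / 2) - ((norm (?p - v))\<^sup>2 / 2 - (norm (?p - w))\<^sup>2 / 2)"
    by (rule strongly_convex_minimizers_dist_le[OF strongly_convex_half_dist_sq strongly_convex_half_dist_sq
          proper_fun_scale[OF lam pr] convex_ereal_fun_scale[OF lam pr cv]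
          prox_minimizes[OF lam pr cv ls] prox_minimizes[OF lam pr cv ls]])
  also have "\<dots> = (?q - ?p) \<bullet> (w - v)"
    unfolding power2_norm_eq_inner by (simp add: inner_diff_left inner_diff_right inner_commute field_simps)
  also have "\<dots> \<le> norm (?q - ?p) * norm (w - v)" by (rule norm_cauchy_schwarz)
  finally have "norm (?p - ?q) * norm (?p - ?q) \<le> norm (?p - ?q) * norm (v - w)"
    by (simp add: power2_eq_square norm_minus_commute)
  then show ?thesis
    by (cases "norm (?p - ?q) = 0") (simp_all add: mult_le_cancel_left_pos)
qed

lemma prox_fixed_point:
  fixes R :: "'v::euclidean_space \<Rightarrow> ereal"
  assumes lam: "lam > 0" and pr: "proper_fun R" and cv: "convex_ereal_fun R" and ls: "lsc_fun R"
    and opt: "\<And>y. ereal (- (w \<bullet> (y - p))) + R p \<le> R y"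
  shows "prox lam R (p - lam *\<^sub>R w) = p"
proof -
  define v where "v = p - lam *\<^sub>R w"
  obtain x0 r0 where "R x0 = ereal r0" using proper_fun_dom_nonemptyE[OF pr] .
  then have "R p \<noteq> \<infinity>" using opt[of x0] by auto
  then obtain rp where rp: "R p = ereal rp" using proper_fun_realE[OF pr] by blast
  have pmin: "ereal ((norm (p - v))\<^sup>2 / 2) + ereal lam * R p \<le> ereal ((norm (u - v))\<^sup>2 / 2) + ereal lam * R u" for u
  proof (cases "R u = \<infinity>")
    case False
    then obtain ru where ru: "R u = ereal ru" using proper_fun_realE[OF pr] by blast
    have "0 \<le> (u - p) \<bullet> w + ru - rp" using opt[of u] by (simp add: rp ru inner_commute)
    then have "0 \<le> (norm (u - p))\<^sup>2 / 2 + lam * ((u - p) \<bullet> w + ru - rp)" using lam by simp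
    moreover have "(norm (u - v))\<^sup>2 = (norm (u - p))\<^sup>2 + 2 * lam * ((u - p) \<bullet> w) + lam\<^sup>2 * (norm w)\<^sup>2"
      unfolding v_def power2_norm_eq_inner
      by (simp add: inner_add_left inner_add_right inner_diff_left inner_diff_right inner_commute
          algebra_simps power2_eq_square)
    moreover have "(norm (p - v))\<^sup>2 = lam\<^sup>2 * (norm w)\<^sup>2"
      by (simp add: v_def power_mult_distrib)
    ultimately show ?thesis by (simp add: rp ru field_simps)
  qed (use lam in \<open>simp add: rp\<close>)
  have "1 * (norm (p - prox lam R v))\<^sup>2 \<le> ((norm (prox lam R v - v))\<^sup>2 / 2 - (norm (prox lam R v - v))\<^sup>2 / 2)
      - ((norm (p - v))\<^sup>2 / 2 - (norm (p - v))\<^sup>2 / 2)"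
    by (rule strongly_convex_minimizers_dist_le[OF strongly_convex_half_dist_sq strongly_convex_half_dist_sq
        proper_fun_scale[OF lam pr] convex_ereal_fun_scale[OF lam pr cv] pmin prox_minimizes[OF lam pr cv ls]])
  then show ?thesis unfolding v_def[symmetric] by simp
qed

section \<open>Minimizers of tilted composite objectives\<close>

definition composite_argmin :: "('v::real_inner \<Rightarrow> real) \<Rightarrow> ('v \<Rightarrow> ereal) \<Rightarrow> 'v \<Rightarrow> 'v" where
  "composite_argmin F R e = argmin_e (\<lambda>x. ereal (F x + x \<bullet> e) + R x)"

lemma composite_argmin_minimizes:
  fixes F :: "'v::euclidean_space \<Rightarrow> real" and R :: "'v \<Rightarrow> ereal"
  assumes der: "\<And>x. (F has_derivative (\<lambda>h. gradF x \<bullet> h)) (at x)" and sc: "strongly_convex \<mu> F" and mu: "\<mu> > 0"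
    and pr: "proper_fun R" and cv: "convex_ereal_fun R" and ls: "lsc_fun R"
  shows "ereal (F (composite_argmin F R e) + composite_argmin F R e \<bullet> e) + R (composite_argmin F R e)
           \<le> ereal (F u + u \<bullet> e) + R u"
proof -
  have "continuous_on UNIV F"
    using der has_derivative_continuous continuous_at_imp_continuous_on by blast
  then have cont: "continuous_on UNIV (\<lambda>x. F x + x \<bullet> e)" by (intro continuous_intros)
  have low: "\<mu> / 2 * (norm y)\<^sup>2 - (norm (gradF 0) + norm e) * norm y - (- F 0) \<le> F y + y \<bullet> e" for y
  proof -
    have "F 0 + gradF 0 \<bullet> (y - 0) + \<mu> / 2 * (norm (y - 0))\<^sup>2 \<le> F y"
      by (rule strongly_convex_first_order[OF sc der])
    moreover have "- (norm (gradF 0) * norm y) \<le> gradF 0 \<bullet> y"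
      using Cauchy_Schwarz_ineq2[of "gradF 0" y] by linarith
    moreover have "- (norm y * norm e) \<le> y \<bullet> e" using Cauchy_Schwarz_ineq2[of y e] by linarith
    ultimately show ?thesis by (simp add: algebra_simps)
  qed
  have "\<exists>p. \<forall>u. ereal (F p + p \<bullet> e) + R p \<le> ereal (F u + u \<bullet> e) + R u"
    using exists_minimizer_coercive_plus_lsc[OF cont _ low pr cv ls] mu by simp
  from someI_ex[OF this] show ?thesis unfolding composite_argmin_def argmin_e_def by blast
qed

lemma composite_minimizer_optimality:
  fixes F :: "'v::euclidean_space \<Rightarrow> real" and R :: "'v \<Rightarrow> ereal"
  assumes der: "\<And>x. (F has_derivative (\<lambda>h. gradF x \<bullet> h)) (at x)" and sc: "strongly_convex \<mu> F"
    and pr: "proper_fun R" and cv: "convex_ereal_fun R"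
    and min: "\<And>u. ereal (F p + p \<bullet> e) + R p \<le> ereal (F u + u \<bullet> e) + R u"
  shows "ereal (- ((gradF p + e) \<bullet> (y - p))) + R p \<le> R y"
proof (cases "R y = \<infinity>")
  case False
  then obtain ry where ry: "R y = ereal ry" using proper_fun_realE[OF pr] by blast
  have "R p \<noteq> \<infinity>"
    using strongly_convex_minimizer_quadratic_growth(1)[OF strongly_convex_add_inner[OF sc] pr cv min] .
  then obtain rp where rp: "R p = ereal rp" using proper_fun_realE[OF pr] by blast
  define d where "d = y - p"
  \<comment> \<open>the one-sided directional derivative of the objective at p towards y is nonnegative\<close>
  have lim: "((\<lambda>t. (F (p + t *\<^sub>R d) - F p) / t + d \<bullet> e + ry - rp) \<longlongrightarrow> gradF p \<bullet> d + d \<bullet> e + ry - rp) (at_right 0)"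
    by (intro tendsto_intros has_derivative_difference_quotient_at_right[OF der])
  have ev: "\<forall>\<^sub>F t in at_right 0. 0 \<le> (F (p + t *\<^sub>R d) - F p) / t + d \<bullet> e + ry - rp"
    using eventually_at_right_real[of 0 1, OF zero_less_one]
  proof (rule eventually_mono)
    fix t :: real assume t: "t \<in> {0<..<1}"
    define z where "z = p + t *\<^sub>R d"
    have "z = (1 - t) *\<^sub>R p + t *\<^sub>R y" by (simp add: z_def d_def algebra_simps)
    then have "R z \<le> ereal (1 - t) * R p + ereal t * R y"
      using cv t unfolding convex_ereal_fun_def by simp
    then have Rz: "R z \<le> ereal ((1 - t) * rp + t * ry)" by (simp add: rp ry)
    then have "R z \<noteq> \<infinity>" by auto
    then obtain rz where rz: "R z = ereal rz" using proper_fun_realE[OF pr] by blast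
    have "F p + p \<bullet> e + rp \<le> F z + z \<bullet> e + rz" using min[of z] by (simp add: rp rz)
    moreover have "rz \<le> (1 - t) * rp + t * ry" using Rz rz by simp
    moreover have "z \<bullet> e = p \<bullet> e + t * (d \<bullet> e)" by (simp add: z_def inner_add_left)
    ultimately have "0 \<le> ((F z - F p) + t * (d \<bullet> e + ry - rp)) / t" using t by (simp add: algebra_simps)
    also have "\<dots> = (F z - F p) / t + d \<bullet> e + ry - rp" using t by (simp add: field_simps)
    finally show "0 \<le> (F (p + t *\<^sub>R d) - F p) / t + d \<bullet> e + ry - rp" by (simp add: z_def)
  qed
  have "0 \<le> gradF p \<bullet> d + d \<bullet> e + ry - rp"
    by (rule tendsto_le[OF trivial_limit_at_right_real lim tendsto_const ev])
  moreover have "(gradF p + e) \<bullet> d = gradF p \<bullet> d + d \<bullet> e" by (simp add: inner_add_left inner_add_right inner_commute)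
  ultimately show ?thesis by (simp add: rp ry d_def)
qed simp

lemma composite_argmin_prox_fixed_point:
  fixes F :: "'v::euclidean_space \<Rightarrow> real" and R :: "'v \<Rightarrow> ereal" and e :: 'v
  assumes der: "\<And>x. (F has_derivative (\<lambda>h. gradF x \<bullet> h)) (at x)" and sc: "strongly_convex \<mu> F" and mu: "\<mu> > 0"
    and pr: "proper_fun R" and cv: "convex_ereal_fun R" and ls: "lsc_fun R" and lam: "lam > 0"
  defines "p \<equiv> composite_argmin F R e"
  shows "prox lam R (p - lam *\<^sub>R (gradF p + e)) = p"
  unfolding p_def
  by (intro prox_fixed_point[OF lam pr cv ls] composite_minimizer_optimality[OF der sc pr cv]
      composite_argmin_minimizes[OF der sc mu pr cv ls])

lemma composite_argmin_lipschitz: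
  fixes F :: "'v::euclidean_space \<Rightarrow> real" and R :: "'v \<Rightarrow> ereal"
  assumes der: "\<And>x. (F has_derivative (\<lambda>h. gradF x \<bullet> h)) (at x)" and sc: "strongly_convex \<mu> F" and mu: "\<mu> > 0"
    and pr: "proper_fun R" and cv: "convex_ereal_fun R" and ls: "lsc_fun R"
  shows "(1 / \<mu>)-lipschitz_on UNIV (composite_argmin F R)"
proof (rule lipschitz_onI)
  fix e1 e2 :: 'v
  let ?p1 = "composite_argmin F R e1" and ?p2 = "composite_argmin F R e2"
  note min = composite_argmin_minimizes[OF der sc mu pr cv ls]
  have "\<mu> * (norm (?p1 - ?p2))\<^sup>2 \<le> ((F ?p2 + ?p2 \<bullet> e1) - (F ?p2 + ?p2 \<bullet> e2)) - ((F ?p1 + ?p1 \<bullet> e1) - (F ?p1 + ?p1 \<bullet> e2))"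
    by (rule strongly_convex_minimizers_dist_le[OF strongly_convex_add_inner[OF sc] strongly_convex_add_inner[OF sc]
          pr cv min min])
  also have "\<dots> = (?p2 - ?p1) \<bullet> (e1 - e2)" by (simp add: inner_diff_left inner_diff_right algebra_simps)
  also have "\<dots> \<le> norm (?p2 - ?p1) * norm (e1 - e2)" by (rule norm_cauchy_schwarz)
  finally have "norm (?p1 - ?p2) * (\<mu> * norm (?p1 - ?p2)) \<le> norm (?p1 - ?p2) * norm (e1 - e2)"
    by (simp add: power2_eq_square norm_minus_commute algebra_simps)
  then have "\<mu> * norm (?p1 - ?p2) \<le> norm (e1 - e2)"
    by (cases "norm (?p1 - ?p2) = 0") (simp_all add: mult_le_cancel_left_pos mu)
  then show "dist ?p1 ?p2 \<le> 1 / \<mu> * dist e1 e2" using mu by (simp add: dist_norm field_simps)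
qed (use mu in simp)

section \<open>One variance-reduced stochastic step\<close>

lemma (in prob_space) integrable_if_norm_sq_integrable:
  fixes g :: "'a \<Rightarrow> 'b::{banach, second_countable_topology}"
  assumes "g \<in> borel_measurable M" "integrable M (\<lambda>z. (norm (g z))\<^sup>2)"
  shows "integrable M g"
proof (rule Bochner_Integration.integrable_bound[OF _ assms(1)])
  show "integrable M (\<lambda>z. 1 + (norm (g z))\<^sup>2)" using assms(2) by simp
  have "n \<le> 1 + n\<^sup>2" for n :: real
    using zero_le_power2[of "n - 1/2"] by (simp add: power2_eq_square algebra_simps)
  then show "AE z in M. norm (g z) \<le> norm (1 + (norm (g z))\<^sup>2)" by (auto intro!: AE_I2)
qed

lemma vr_direction_norm_sq_le:
  fixes gf :: "'v::real_normed_vector \<Rightarrow> 'z \<Rightarrow> 'v" and gradF :: "'v \<Rightarrow> 'v"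
  assumes gf_lip: "\<And>x y. norm (gf x z - gf y z) \<le> L * norm (x - y)"
    and F_smooth: "\<And>x y. norm (gradF x - gradF y) \<le> L * norm (x - y)"
    and L: "0 \<le> L"
  shows "(norm (gf a z - gf c z + (gradF c - gradF b)))\<^sup>2 \<le> L\<^sup>2 * (2 * (norm (a - b))\<^sup>2 + 8 * (norm (c - b))\<^sup>2)"
proof -
  have "norm (gf a z - gf c z + (gradF c - gradF b)) \<le> L * norm (a - c) + L * norm (c - b)"
    using norm_triangle_ineq[of "gf a z - gf c z" "gradF c - gradF b"] gf_lip[of a c] F_smooth[of c b]
    by simp
  also have "\<dots> \<le> L * (norm (a - b) + 2 * norm (c - b))"
    using mult_left_mono[OF norm_triangle_ineq4[of "a - b" "c - b"] L] by (simp add: algebra_simps)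
  finally have "(norm (gf a z - gf c z + (gradF c - gradF b)))\<^sup>2 \<le> (L * (norm (a - b) + 2 * norm (c - b)))\<^sup>2"
    by (rule power_mono) simp
  also have "\<dots> = L\<^sup>2 * (norm (a - b) + 2 * norm (c - b))\<^sup>2" by (simp add: power_mult_distrib)
  also have "\<dots> \<le> L\<^sup>2 * (2 * (norm (a - b))\<^sup>2 + 8 * (norm (c - b))\<^sup>2)"
  proof (rule mult_left_mono)
    have "0 \<le> (norm (a - b) - 2 * norm (c - b))\<^sup>2" by simp
    then show "(norm (a - b) + 2 * norm (c - b))\<^sup>2 \<le> 2 * (norm (a - b))\<^sup>2 + 8 * (norm (c - b))\<^sup>2"
      by (simp add: power2_eq_square algebra_simps)
  qed simp
  finally show ?thesis .
qed

lemma expected_sq_vr_step_le: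
  fixes P0 :: "'z measure" and gf :: "'v::euclidean_space \<Rightarrow> 'z \<Rightarrow> 'v" and gradF :: "'v \<Rightarrow> 'v"
  assumes P0: "prob_space P0"
    and gf_lip: "\<And>x y z. z \<in> space P0 \<Longrightarrow> norm (gf x z - gf y z) \<le> L * norm (x - y)"
    and gf_meas: "\<And>x. gf x \<in> borel_measurable P0"
    and gf_sq: "\<And>x. integrable P0 (\<lambda>z. (norm (gf x z))\<^sup>2)"
    and gf_unbiased: "\<And>x. (\<integral>z. gf x z \<partial>P0) = gradF x"
    and F_smooth: "\<And>x y. norm (gradF x - gradF y) \<le> L * norm (x - y)"
    and mono: "\<And>a b. \<mu> * (norm (a - b))\<^sup>2 \<le> (a - b) \<bullet> (gradF a - gradF b)"
    and lam: "lam > 0" and L: "L \<ge> 0" and small: "2 * lam * L\<^sup>2 \<le> \<mu>"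
  shows "(\<integral>\<^sup>+z. ennreal ((norm ((a - b) - lam *\<^sub>R (gf a z - gf c z + gradF c - gradF b)))\<^sup>2) \<partial>P0)
          \<le> ennreal ((1 - lam * \<mu>) * (norm (a - b))\<^sup>2 + 8 * lam\<^sup>2 * L\<^sup>2 * (norm (c - b))\<^sup>2)"
proof -
  interpret P: prob_space P0 by fact
  have gint: "integrable P0 (gf x)" for x
    using P.integrable_if_norm_sq_integrable[OF gf_meas gf_sq] .
  define u where "u = a - b"
  define W where "W z = gf a z - gf c z + (gradF c - gradF b)" for z
  define Bd where "Bd = L\<^sup>2 * (2 * (norm u)\<^sup>2 + 8 * (norm (c - b))\<^sup>2)"
  \<comment> \<open>expand the square: the cross term has mean u \<bullet> (gradF a - gradF b), the quadratic term is bounded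
      pointwise by the Lipschitz bounds\<close>
  define h where "h z = ((norm u)\<^sup>2 + lam\<^sup>2 * Bd) + (-2 * lam) * (u \<bullet> W z)" for z
  have pointwise: "(norm (u - lam *\<^sub>R W z))\<^sup>2 \<le> h z" if z: "z \<in> space P0" for z
  proof -
    have "lam\<^sup>2 * (norm (W z))\<^sup>2 \<le> lam\<^sup>2 * Bd"
      unfolding W_def Bd_def u_def using vr_direction_norm_sq_le[where gf=gf and z=z, OF gf_lip[OF z] F_smooth L]
      by (intro mult_left_mono) simp_all
    moreover have "(norm (u - lam *\<^sub>R W z))\<^sup>2 = (norm u)\<^sup>2 - 2 * lam * (u \<bullet> W z) + lam\<^sup>2 * (norm (W z))\<^sup>2"
      unfolding power2_norm_eq_inner
      by (simp add: inner_diff_left inner_diff_right inner_commute power2_eq_square algebra_simps)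
    ultimately show ?thesis unfolding h_def by simp
  qed
  have Wint: "integrable P0 W" unfolding W_def using gint by auto
  have h_int: "integrable P0 h" unfolding h_def using Wint by auto
  have "(\<integral>z. W z \<partial>P0) = gradF a - gradF b"
    unfolding W_def using gint gf_unbiased P.prob_space by simp
  then have h_mean: "(\<integral>z. h z \<partial>P0) = (norm u)\<^sup>2 + lam\<^sup>2 * Bd - 2 * lam * (u \<bullet> (gradF a - gradF b))"
    unfolding h_def using Wint P.prob_space by simp
  have "(\<integral>\<^sup>+z. ennreal ((norm ((a - b) - lam *\<^sub>R (gf a z - gf c z + gradF c - gradF b)))\<^sup>2) \<partial>P0)
       = (\<integral>\<^sup>+z. ennreal ((norm (u - lam *\<^sub>R W z))\<^sup>2) \<partial>P0)"
    by (simp add: u_def W_def algebra_simps)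
  also have "\<dots> \<le> (\<integral>\<^sup>+z. ennreal (h z) \<partial>P0)"
    by (rule nn_integral_mono) (rule ennreal_leI[OF pointwise])
  also have "\<dots> = ennreal (\<integral>z. h z \<partial>P0)"
    using pointwise by (intro nn_integral_eq_integral[OF h_int]) (auto intro!: AE_I2 order_trans[OF zero_le_power2])
  also have "\<dots> \<le> ennreal ((1 - lam * \<mu>) * (norm (a - b))\<^sup>2 + 8 * lam\<^sup>2 * L\<^sup>2 * (norm (c - b))\<^sup>2)"
  proof (rule ennreal_leI)
    have "2 * lam * (\<mu> * (norm u)\<^sup>2) \<le> 2 * lam * (u \<bullet> (gradF a - gradF b))"
      using mono[of a b] lam by (simp add: u_def)
    moreover have "lam * (2 * lam * L\<^sup>2) * (norm u)\<^sup>2 \<le> lam * \<mu> * (norm u)\<^sup>2"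
      using small lam by (simp add: mult_right_mono)
    ultimately show "(\<integral>z. h z \<partial>P0) \<le> (1 - lam * \<mu>) * (norm (a - b))\<^sup>2 + 8 * lam\<^sup>2 * L\<^sup>2 * (norm (c - b))\<^sup>2"
      unfolding h_mean Bd_def u_def[symmetric] by (simp add: power2_eq_square algebra_simps)
  qed
  finally show ?thesis .
qed

section \<open>Measurability and independence of i.i.d. samples\<close>

lemma borel_measurable_caratheodory:
  fixes g :: "'v::euclidean_space \<Rightarrow> 'z \<Rightarrow> 'w::euclidean_space"
  assumes cont: "\<And>z. z \<in> space P \<Longrightarrow> continuous_on UNIV (\<lambda>x. g x z)"
    and gm: "\<And>x. g x \<in> borel_measurable P"
    and X: "X \<in> borel_measurable N" and Y: "Y \<in> N \<rightarrow>\<^sub>M P"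
  shows "(\<lambda>\<omega>. g (X \<omega>) (Y \<omega>)) \<in> borel_measurable N"
proof -
  \<comment> \<open>approximate X \<omega> by the first point of a countable dense set within distance 1 / (k + 1)\<close>
  obtain D :: "'v set" where D: "countable D" "\<And>U. open U \<Longrightarrow> U \<noteq> {} \<Longrightarrow> \<exists>d\<in>D. d \<in> U"
    by (erule countable_dense_setE)
  have "D \<noteq> {}" using D(2)[of UNIV] by auto
  define ee where "ee = from_nat_into D"
  have eeD: "range ee = D" unfolding ee_def using D(1) \<open>D \<noteq> {}\<close> by (simp add: range_from_nat_into)
  have ex: "\<exists>i. dist (ee i) x < r" if "r > 0" for x r
  proof -
    have "ball x r \<noteq> {}" using that by (metis centre_in_ball empty_iff)
    then obtain d where "d \<in> D" "d \<in> ball x r" using D(2)[of "ball x r"] by blast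
    then show ?thesis using eeD by (metis dist_commute imageE mem_ball)
  qed
  define idx where "idx k \<omega> = (LEAST i. dist (ee i) (X \<omega>) < 1 / Suc k)" for k \<omega>
  have idx_dist: "dist (ee (idx k \<omega>)) (X \<omega>) < 1 / Suc k" for k \<omega>
    unfolding idx_def by (rule LeastI_ex) (rule ex, simp)
  have idx_meas: "idx k \<in> N \<rightarrow>\<^sub>M count_space UNIV" for k
    unfolding idx_def using X by measurable
  have "(\<lambda>\<omega>. g (ee i) (Y \<omega>)) \<in> borel_measurable N" for i
    using measurable_compose[OF Y gm] .
  then have approx_meas: "(\<lambda>\<omega>. g (ee (idx k \<omega>)) (Y \<omega>)) \<in> borel_measurable N" for k
    by (rule measurable_compose_countable[where f="\<lambda>i \<omega>. g (ee i) (Y \<omega>)", OF _ idx_meas])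
  show ?thesis
  proof (rule borel_measurable_LIMSEQ_metric[OF approx_meas])
    fix \<omega> assume \<omega>: "\<omega> \<in> space N"
    have "(\<lambda>k. ee (idx k \<omega>)) \<longlonglongrightarrow> X \<omega>"
    proof (rule metric_LIMSEQ_I)
      fix r :: real assume "0 < r"
      then obtain n0 :: nat where n0: "1 / Suc n0 < r"
        using reals_Archimedean[of r] by (auto simp: inverse_eq_divide)
      have "dist (ee (idx n \<omega>)) (X \<omega>) < r" if "n0 \<le> n" for n
      proof -
        have "1 / real (Suc n) \<le> 1 / Suc n0" using that by (simp add: frac_le)
        then show ?thesis using idx_dist[of n \<omega>] n0 by linarith
      qed
      then show "\<exists>no. \<forall>n\<ge>no. dist (ee (idx n \<omega>)) (X \<omega>) < r" by blast
    qed
    moreover have "isCont (\<lambda>x. g x (Y \<omega>)) (X \<omega>)"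
      using cont[OF measurable_space[OF Y \<omega>]] continuous_on_eq_continuous_at open_UNIV by blast
    ultimately show "(\<lambda>k. g (ee (idx k \<omega>)) (Y \<omega>)) \<longlonglongrightarrow> g (X \<omega>) (Y \<omega>)"
      using isCont_tendsto_compose by blast
  qed
qed

lemma prob_space_imp_sequence_space: "prob_space P0 \<Longrightarrow> sequence_space P0"
  unfolding sequence_space_def product_prob_space_def product_prob_space_axioms_def product_sigma_finite_def
  by (auto intro: prob_space_imp_sigma_finite)

lemma nn_integral_PiM_fresh_coordinate:
  fixes P0 :: "'z measure" and \<phi> :: "(nat \<Rightarrow> 'z) \<Rightarrow> 'z \<Rightarrow> ennreal"
  assumes P0: "prob_space P0"
    and prefix: "\<And>\<omega> \<omega>' z. (\<And>i. i < n \<Longrightarrow> \<omega> i = \<omega>' i) \<Longrightarrow> \<phi> \<omega> z = \<phi> \<omega>' z"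
    and meas: "(\<lambda>p. \<phi> (fst p) (snd p)) \<in> borel_measurable (PiM UNIV (\<lambda>_::nat. P0) \<Otimes>\<^sub>M P0)"
  shows "(\<integral>\<^sup>+\<omega>. \<phi> \<omega> (\<omega> n) \<partial>PiM UNIV (\<lambda>_::nat. P0))
       = (\<integral>\<^sup>+\<omega>. (\<integral>\<^sup>+z. \<phi> \<omega> z \<partial>P0) \<partial>PiM UNIV (\<lambda>_::nat. P0))"
proof -
  interpret S: sequence_space P0 using prob_space_imp_sequence_space[OF P0] .
  let ?S = "PiM UNIV (\<lambda>_::nat. P0)"
  interpret SS: pair_sigma_finite ?S ?S
    by (simp add: S.P.sigma_finite_measure_axioms pair_sigma_finite_def)
  have "(\<lambda>\<omega>. (\<omega>, \<omega> n)) \<in> ?S \<rightarrow>\<^sub>M ?S \<Otimes>\<^sub>M P0" by measurable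
  from measurable_compose[OF this meas] have mphi: "(\<lambda>\<omega>. \<phi> \<omega> (\<omega> n)) \<in> borel_measurable ?S" by simp
  have "(\<lambda>p. (fst p, snd p 0)) \<in> ?S \<Otimes>\<^sub>M ?S \<rightarrow>\<^sub>M ?S \<Otimes>\<^sub>M P0" by measurable
  from measurable_compose[OF this meas]
  have mphi2: "(\<lambda>p. \<phi> (fst p) (snd p 0)) \<in> borel_measurable (?S \<Otimes>\<^sub>M ?S)" by simp
  \<comment> \<open>split the sequence after its first n entries; the coordinate n becomes the first entry of an
      independent copy\<close>
  have "(\<integral>\<^sup>+\<omega>. \<phi> \<omega> (\<omega> n) \<partial>?S) = (\<integral>\<^sup>+\<omega>. \<phi> \<omega> (\<omega> n) \<partial>distr (?S \<Otimes>\<^sub>M ?S) ?S (\<lambda>(\<omega>, \<omega>'). comb_seq n \<omega> \<omega>'))"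
    by (simp add: S.PiM_comb_seq)
  also have "\<dots> = (\<integral>\<^sup>+p. \<phi> (comb_seq n (fst p) (snd p)) (comb_seq n (fst p) (snd p) n) \<partial>(?S \<Otimes>\<^sub>M ?S))"
    by (subst nn_integral_distr) (auto simp: case_prod_beta intro: measurable_comb_seq[unfolded case_prod_beta] mphi)
  also have "\<dots> = (\<integral>\<^sup>+p. \<phi> (fst p) (snd p 0) \<partial>(?S \<Otimes>\<^sub>M ?S))"
  proof (rule nn_integral_cong)
    fix p :: "(nat \<Rightarrow> 'z) \<times> (nat \<Rightarrow> 'z)"
    have "comb_seq n (fst p) (snd p) n = snd p 0" using comb_seq_add[of n _ _ 0] by simp
    moreover have "\<phi> (comb_seq n (fst p) (snd p)) z = \<phi> (fst p) z" for z
      by (rule prefix) (simp add: comb_seq_less)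
    ultimately show "\<phi> (comb_seq n (fst p) (snd p)) (comb_seq n (fst p) (snd p) n) = \<phi> (fst p) (snd p 0)" by simp
  qed
  also have "\<dots> = (\<integral>\<^sup>+\<omega>. (\<integral>\<^sup>+\<omega>'. \<phi> \<omega> (\<omega>' 0) \<partial>?S) \<partial>?S)"
    using S.P.nn_integral_fst[OF mphi2] by simp
  also have "\<dots> = (\<integral>\<^sup>+\<omega>. (\<integral>\<^sup>+z. \<phi> \<omega> z \<partial>P0) \<partial>?S)"
  proof (rule nn_integral_cong)
    fix \<omega> assume \<omega>: "\<omega> \<in> space ?S"
    have mz: "(\<lambda>z. \<phi> \<omega> z) \<in> borel_measurable P0"
      using measurable_compose[OF _ meas, of "\<lambda>z. (\<omega>, z)"] \<omega> by simp
    have "(\<integral>\<^sup>+z. \<phi> \<omega> z \<partial>P0) = (\<integral>\<^sup>+z. \<phi> \<omega> z \<partial>distr ?S P0 (\<lambda>\<omega>'. \<omega>' 0))"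
      using S.PiM_component[of 0] by simp
    also have "\<dots> = (\<integral>\<^sup>+\<omega>'. \<phi> \<omega> (\<omega>' 0) \<partial>?S)"
      by (subst nn_integral_distr) (auto intro: mz)
    finally show "(\<integral>\<^sup>+\<omega>'. \<phi> \<omega> (\<omega>' 0) \<partial>?S) = (\<integral>\<^sup>+z. \<phi> \<omega> z \<partial>P0)" by simp
  qed
  finally show ?thesis .
qed

section \<open>The VRPG iterates\<close>

lemma vrpg_j_Suc: "1 \<le> m \<Longrightarrow> vrpg_j T K (Suc m) = vrpg_j T K m + T + K"
  unfolding vrpg_j_def by (cases m) (simp_all add: algebra_simps)

lemma vrpg_gbar_prefix:
  assumes "\<And>i. i < vrpg_j T K m + T + 1 \<Longrightarrow> \<omega> i = \<omega>' i"
  shows "vrpg_gbar gf T K m \<omega> x = vrpg_gbar gf T K m \<omega>' x"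
  unfolding vrpg_gbar_def using assms by (intro arg_cong[where f="\<lambda>s. _ *\<^sub>R s"] sum.cong) auto

lemma vrpg_inner_prefix:
  assumes "\<And>i. i < vrpg_j T K m + T + k + 1 \<Longrightarrow> \<omega> i = \<omega>' i"
  shows "vrpg_inner gf R lam T K m \<omega> xb k = vrpg_inner gf R lam T K m \<omega>' xb k"
  using assms
proof (induction k)
  case (Suc k)
  have "vrpg_inner gf R lam T K m \<omega> xb k = vrpg_inner gf R lam T K m \<omega>' xb k"
    using Suc.prems by (intro Suc.IH) simp
  moreover have "vrpg_gbar gf T K m \<omega> xb = vrpg_gbar gf T K m \<omega>' xb"
    using Suc.prems by (intro vrpg_gbar_prefix) simp
  moreover have "\<omega> (vrpg_j T K m + T + Suc k) = \<omega>' (vrpg_j T K m + T + Suc k)"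
    using Suc.prems by simp
  ultimately show ?case by (simp add: Let_def vrpg_G_def)
qed simp

lemma vrpg_xbar_prefix:
  assumes "\<And>i. i < vrpg_j T K m + 1 \<Longrightarrow> \<omega> i = \<omega>' i"
  shows "vrpg_xbar gf R lam T K x1 \<omega> m = vrpg_xbar gf R lam T K x1 \<omega>' m"
  using assms
proof (induction m)
  case (Suc m)
  show ?case
  proof (cases "m = 0")
    case False
    then have jj: "vrpg_j T K (Suc m) = vrpg_j T K m + T + K" by (simp add: vrpg_j_Suc)
    have "vrpg_xbar gf R lam T K x1 \<omega> m = vrpg_xbar gf R lam T K x1 \<omega>' m"
      using Suc.prems jj by (intro Suc.IH) simp
    moreover have "vrpg_inner gf R lam T K m \<omega> (vrpg_xbar gf R lam T K x1 \<omega>' m) K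
        = vrpg_inner gf R lam T K m \<omega>' (vrpg_xbar gf R lam T K x1 \<omega>' m) K"
      using Suc.prems jj by (intro vrpg_inner_prefix) simp
    ultimately show ?thesis using False by simp
  qed simp
qed simp

lemma ennreal_affine_recurrence_bound:
  fixes d :: "nat \<Rightarrow> ennreal" and q C :: real
  assumes q: "0 \<le> q" and C: "0 \<le> C" and step: "\<And>k. d (Suc k) \<le> ennreal q * d k + ennreal C * d 0"
  shows "d k \<le> ennreal (q ^ k + C * (\<Sum>i<k. q ^ i)) * d 0"
proof (induction k)
  case (Suc k)
  define \<alpha> where "\<alpha> = q ^ k + C * (\<Sum>i<k. q ^ i)"
  have \<alpha>: "0 \<le> \<alpha>" unfolding \<alpha>_def using q C by (intro add_nonneg_nonneg mult_nonneg_nonneg sum_nonneg) simp_all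
  have "d (Suc k) \<le> ennreal q * d k + ennreal C * d 0" by (rule step)
  also have "\<dots> \<le> ennreal q * (ennreal \<alpha> * d 0) + ennreal C * d 0"
    using Suc.IH unfolding \<alpha>_def by (intro add_mono mult_left_mono) simp_all
  also have "\<dots> = ennreal (q * \<alpha> + C) * d 0"
    using q \<alpha> C by (simp add: ennreal_plus ennreal_mult distrib_right mult.assoc)
  also have "q * \<alpha> + C = q ^ Suc k + C * (\<Sum>i<Suc k. q ^ i)"
    unfolding \<alpha>_def by (simp add: sum.lessThan_Suc_shift sum_distrib_left algebra_simps del: sum.lessThan_Suc)
  finally show ?case .
qed simp

lemma vrpg_tuning_bound:
  fixes \<mu> L lam :: real and K :: nat
  assumes mu_pos: "0 < \<mu>" and mu_L: "\<mu> \<le> L"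
    and lam_def: "lam = \<mu> / (6 * 8\<^sup>2 * L\<^sup>2)"
    and K_def: "real K = ln 120 / ln (1 / (1 - \<mu>\<^sup>2 / (6 * 8\<^sup>2 * L\<^sup>2)))"
  shows "(1 - lam * \<mu>) ^ K + 8 * lam\<^sup>2 * L\<^sup>2 * (\<Sum>i<K. (1 - lam * \<mu>) ^ i) \<le> 1 / 20"
proof -
  define q where "q = 1 - lam * \<mu>"
  have L_pos: "0 < L" using mu_pos mu_L by simp
  have q_eq: "q = 1 - \<mu>\<^sup>2 / (6 * 8\<^sup>2 * L\<^sup>2)" by (simp add: q_def lam_def power2_eq_square)
  have "\<mu>\<^sup>2 \<le> L\<^sup>2" using mu_pos mu_L by (simp add: power_mono)
  moreover have "0 < L\<^sup>2" using L_pos by simp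
  ultimately have "\<mu>\<^sup>2 < L\<^sup>2 * 384" by linarith
  then have q_pos: "0 < q" unfolding q_eq using L_pos by (simp add: field_simps)
  have q_lt1: "q < 1" using mu_pos L_pos by (simp add: q_def lam_def)
  have "real K * ln (1 / q) = ln 120"
    using K_def q_pos q_lt1 unfolding q_eq[symmetric] by simp
  then have "real K * ln q = - ln 120" using q_pos by (simp add: ln_div)
  moreover have "q ^ K = exp (real K * ln q)" using q_pos by (simp add: exp_of_nat_mult)
  ultimately have "q ^ K = 1 / 120" by (simp add: exp_minus inverse_eq_divide)
  moreover have "8 * lam\<^sup>2 * L\<^sup>2 * (\<Sum>i<K. q ^ i) \<le> 1 / 48"
  proof -
    have "(\<Sum>i<K. q ^ i) = (1 - q ^ K) / (1 - q)" using q_lt1 by (simp add: sum_gp_strict)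
    also have "\<dots> \<le> 1 / (1 - q)" using q_lt1 q_pos by (simp add: divide_right_mono)
    finally have "8 * lam\<^sup>2 * L\<^sup>2 * (\<Sum>i<K. q ^ i) \<le> 8 * lam\<^sup>2 * L\<^sup>2 * (1 / (1 - q))"
      by (rule mult_left_mono) simp
    also have "\<dots> = 1 / 48"
      using mu_pos L_pos by (simp add: q_def lam_def power2_eq_square)
    finally show ?thesis .
  qed
  ultimately show ?thesis unfolding q_def by simp
qed

section \<open>Contraction of one epoch\<close>

locale vrpg_problem =
  fixes P0 :: "'z measure" and gf :: "'v::euclidean_space \<Rightarrow> 'z \<Rightarrow> 'v"
    and F :: "'v \<Rightarrow> real" and gradF :: "'v \<Rightarrow> 'v" and R :: "'v \<Rightarrow> ereal"
    and \<mu> L lam :: real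
  assumes P0: "prob_space P0"
    and mu_pos: "0 < \<mu>" and mu_le_L: "\<mu> \<le> L"
    and F_deriv: "\<And>x. (F has_derivative (\<lambda>h. gradF x \<bullet> h)) (at x)"
    and F_sc: "strongly_convex \<mu> F"
    and F_smooth: "\<And>x y. norm (gradF x - gradF y) \<le> L * norm (x - y)"
    and R_proper: "proper_fun R" and R_convex: "convex_ereal_fun R" and R_lsc: "lsc_fun R"
    and gf_cont: "\<And>z. z \<in> space P0 \<Longrightarrow> continuous_on UNIV (\<lambda>x. gf x z)"
    and gf_lip: "\<And>x y z. z \<in> space P0 \<Longrightarrow> norm (gf x z - gf y z) \<le> L * norm (x - y)"
    and gf_meas: "\<And>x. gf x \<in> borel_measurable P0"
    and gf_sq: "\<And>x. integrable P0 (\<lambda>z. (norm (gf x z))\<^sup>2)"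
    and gf_unbiased: "\<And>x. (\<integral>z. gf x z \<partial>P0) = gradF x"
    and lam_pos: "0 < lam" and lam_small: "2 * lam * L\<^sup>2 \<le> \<mu>"
begin

abbreviation samples :: "(nat \<Rightarrow> 'z) measure" where
  "samples \<equiv> PiM UNIV (\<lambda>_::nat. P0)"

lemma continuous_on_gradF: "continuous_on UNIV gradF"
  using mu_pos mu_le_L F_smooth
  by (intro lipschitz_on_continuous_on[of L] lipschitz_onI) (simp_all add: dist_norm)

lemma continuous_on_prox: "continuous_on UNIV (prox lam R)"
  using prox_nonexpansive[OF lam_pos R_proper R_convex R_lsc]
  by (intro lipschitz_on_continuous_on[of 1] lipschitz_onI) (simp_all add: dist_norm)

lemma continuous_on_composite_argmin: "continuous_on UNIV (composite_argmin F R)"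
  by (rule lipschitz_on_continuous_on[OF composite_argmin_lipschitz[OF F_deriv F_sc mu_pos R_proper R_convex R_lsc]])

lemma borel_measurable_gf_sample:
  assumes "X \<in> borel_measurable samples"
  shows "(\<lambda>\<omega>. gf (X \<omega>) (\<omega> n)) \<in> borel_measurable samples"
  by (rule borel_measurable_caratheodory[OF gf_cont gf_meas assms measurable_component_singleton]) simp_all

lemma borel_measurable_vrpg_gbar:
  assumes "X \<in> borel_measurable samples"
  shows "(\<lambda>\<omega>. vrpg_gbar gf T K m \<omega> (X \<omega>)) \<in> borel_measurable samples"
  unfolding vrpg_gbar_def
  by (intro borel_measurable_scaleR borel_measurable_const borel_measurable_sum borel_measurable_gf_sample assms)

lemma borel_measurable_vrpg_inner:
  assumes xb: "xb \<in> borel_measurable samples"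
  shows "(\<lambda>\<omega>. vrpg_inner gf R lam T K m \<omega> (xb \<omega>) k) \<in> borel_measurable samples"
proof (induction k)
  case (Suc k)
  show ?case
    unfolding vrpg_inner.simps Let_def vrpg_G_def
    by (intro borel_measurable_continuous_on[OF continuous_on_prox] borel_measurable_diff borel_measurable_add
        borel_measurable_scaleR borel_measurable_const borel_measurable_gf_sample borel_measurable_vrpg_gbar Suc xb)
qed (use xb in simp)

lemma borel_measurable_vrpg_xbar: "(\<lambda>\<omega>. vrpg_xbar gf R lam T K x1 \<omega> m) \<in> borel_measurable samples"
proof (induction m)
  case (Suc m)
  then show ?case using borel_measurable_vrpg_inner[OF Suc] by (cases "m = 0") simp_all
qed simp

lemma step_factor_nonneg: "0 \<le> 1 - lam * \<mu>"
proof -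
  have "2 * lam * \<mu>\<^sup>2 \<le> 2 * lam * L\<^sup>2"
    using lam_pos mu_pos mu_le_L by (simp add: power_mono)
  then have "2 * lam * \<mu> * \<mu> \<le> 1 * \<mu>" using lam_small by (simp add: power2_eq_square)
  then show ?thesis using mu_pos lam_pos by (simp add: mult_le_cancel_right)
qed

lemma borel_measurable_vr_step_integrand:
  assumes x: "x \<in> borel_measurable samples" and y: "y \<in> borel_measurable samples"
    and w: "w \<in> borel_measurable samples"
  shows "(\<lambda>p. ennreal ((norm ((x (fst p) - y (fst p)) - lam *\<^sub>R (gf (x (fst p)) (snd p) - gf (w (fst p)) (snd p)
            + gradF (w (fst p)) - gradF (y (fst p)))))\<^sup>2)) \<in> borel_measurable (samples \<Otimes>\<^sub>M P0)"
proof -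
  have fst_meas: "(\<lambda>p. X (fst p)) \<in> borel_measurable (samples \<Otimes>\<^sub>M P0)"
    if "X \<in> borel_measurable samples" for X :: "(nat \<Rightarrow> 'z) \<Rightarrow> 'v"
    using that by (auto intro: measurable_compose[OF measurable_fst])
  have "(\<lambda>p. gf (X (fst p)) (snd p)) \<in> borel_measurable (samples \<Otimes>\<^sub>M P0)"
    if "X \<in> borel_measurable samples" for X
    by (rule borel_measurable_caratheodory[OF gf_cont gf_meas fst_meas[OF that] measurable_snd])
  moreover have "(\<lambda>p. gradF (X (fst p))) \<in> borel_measurable (samples \<Otimes>\<^sub>M P0)"
    if "X \<in> borel_measurable samples" for X
    by (rule borel_measurable_continuous_on[OF continuous_on_gradF fst_meas[OF that]])
  ultimately show ?thesis
    using fst_meas[OF x] fst_meas[OF y] fst_meas[OF w] x y w by measurable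
qed

lemma vrpg_inner_Suc_dist_le:
  assumes xh: "xh = composite_argmin F R (vrpg_gbar gf T K m \<omega> xb - gradF xb)"
    and x: "x = vrpg_inner gf R lam T K m \<omega> xb k"
    and z: "z = \<omega> (vrpg_j T K m + T + Suc k)"
  shows "norm (vrpg_inner gf R lam T K m \<omega> xb (Suc k) - xh)
           \<le> norm ((x - xh) - lam *\<^sub>R (gf x z - gf xb z + gradF xb - gradF xh))"
proof -
  define e where "e = vrpg_gbar gf T K m \<omega> xb - gradF xb"
  have "prox lam R (xh - lam *\<^sub>R (gradF xh + e)) = xh"
    unfolding xh e_def
    by (rule composite_argmin_prox_fixed_point[OF F_deriv F_sc mu_pos R_proper R_convex R_lsc lam_pos])
  moreover have "vrpg_inner gf R lam T K m \<omega> xb (Suc k) = prox lam R (x - lam *\<^sub>R vrpg_G gf T K m (Suc k) \<omega> xb x)"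
    by (simp add: x Let_def)
  moreover have "norm (prox lam R (x - lam *\<^sub>R vrpg_G gf T K m (Suc k) \<omega> xb x) - prox lam R (xh - lam *\<^sub>R (gradF xh + e)))
      \<le> norm ((x - lam *\<^sub>R vrpg_G gf T K m (Suc k) \<omega> xb x) - (xh - lam *\<^sub>R (gradF xh + e)))"
    by (rule prox_nonexpansive[OF lam_pos R_proper R_convex R_lsc])
  moreover have "(x - lam *\<^sub>R vrpg_G gf T K m (Suc k) \<omega> xb x) - (xh - lam *\<^sub>R (gradF xh + e))
      = (x - xh) - lam *\<^sub>R (gf x z - gf xb z + gradF xb - gradF xh)"
    by (simp add: vrpg_G_def e_def z algebra_simps)
  ultimately show ?thesis by simp
qed

lemma vrpg_inner_step_mean_sq:
  assumes xb_meas: "xb \<in> borel_measurable samples"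
    and xb_prefix: "\<And>\<omega> \<omega>'. (\<And>i. i < vrpg_j T K m + T + 1 \<Longrightarrow> \<omega> i = \<omega>' i) \<Longrightarrow> xb \<omega> = xb \<omega>'"
  defines "d \<equiv> \<lambda>k. \<integral>\<^sup>+\<omega>. ennreal ((norm (vrpg_inner gf R lam T K m \<omega> (xb \<omega>) k
      - composite_argmin F R (vrpg_gbar gf T K m \<omega> (xb \<omega>) - gradF (xb \<omega>))))\<^sup>2) \<partial>samples"
  shows "d (Suc k) \<le> ennreal (1 - lam * \<mu>) * d k + ennreal (8 * lam\<^sup>2 * L\<^sup>2) * d 0"
proof -
  define xh where "xh \<omega> = composite_argmin F R (vrpg_gbar gf T K m \<omega> (xb \<omega>) - gradF (xb \<omega>))" for \<omega>
  define n where "n = vrpg_j T K m + T + Suc k"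
  define xk where "xk j \<omega> = vrpg_inner gf R lam T K m \<omega> (xb \<omega>) j" for j \<omega>
  define \<phi> where "\<phi> \<omega> z = ennreal ((norm ((xk k \<omega> - xh \<omega>)
      - lam *\<^sub>R (gf (xk k \<omega>) z - gf (xb \<omega>) z + gradF (xb \<omega>) - gradF (xh \<omega>))))\<^sup>2)" for \<omega> z
  have pointwise: "(norm (xk (Suc k) \<omega> - xh \<omega>))\<^sup>2 \<le> enn2real (\<phi> \<omega> (\<omega> n))" for \<omega>
    unfolding \<phi>_def xk_def using vrpg_inner_Suc_dist_le[OF _ refl, of "xh \<omega>" T K m \<omega> "xb \<omega>" "\<omega> n" k]
    by (simp add: xh_def n_def power_mono)
  \<comment> \<open>the sample \<omega> n drawn at this step is independent of everything the integrand depends on otherwise\<close>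
  have prefix: "\<phi> \<omega> z = \<phi> \<omega>' z" if agree: "\<And>i. i < n \<Longrightarrow> \<omega> i = \<omega>' i" for \<omega> \<omega>' z
  proof -
    have "xb \<omega> = xb \<omega>'" by (rule xb_prefix) (simp add: agree n_def)
    moreover have "vrpg_gbar gf T K m \<omega> x = vrpg_gbar gf T K m \<omega>' x" for x
      by (rule vrpg_gbar_prefix) (simp add: agree n_def)
    moreover have "vrpg_inner gf R lam T K m \<omega> (xb \<omega>') k = vrpg_inner gf R lam T K m \<omega>' (xb \<omega>') k"
      by (rule vrpg_inner_prefix) (simp add: agree n_def)
    ultimately show ?thesis by (simp add: \<phi>_def xk_def xh_def)
  qed
  have xk_meas: "xk j \<in> borel_measurable samples" for j
    unfolding xk_def by (rule borel_measurable_vrpg_inner[OF xb_meas])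
  have xh_meas: "xh \<in> borel_measurable samples"
    unfolding xh_def
    by (intro borel_measurable_continuous_on[OF continuous_on_composite_argmin] borel_measurable_diff
        borel_measurable_vrpg_gbar xb_meas borel_measurable_continuous_on[OF continuous_on_gradF])
  have meas: "(\<lambda>p. \<phi> (fst p) (snd p)) \<in> borel_measurable (samples \<Otimes>\<^sub>M P0)"
    unfolding \<phi>_def by (rule borel_measurable_vr_step_integrand[OF xk_meas xh_meas xb_meas])
  have L_nonneg: "0 \<le> L" using mu_pos mu_le_L by simp
  have "d (Suc k) \<le> (\<integral>\<^sup>+\<omega>. \<phi> \<omega> (\<omega> n) \<partial>samples)"
    unfolding d_def xh_def[symmetric] using pointwise by (intro nn_integral_mono) (simp add: xk_def \<phi>_def ennreal_leI)
  also have "\<dots> = (\<integral>\<^sup>+\<omega>. (\<integral>\<^sup>+z. \<phi> \<omega> z \<partial>P0) \<partial>samples)"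
    by (rule nn_integral_PiM_fresh_coordinate[OF P0 prefix meas])
  also have "\<dots> \<le> (\<integral>\<^sup>+\<omega>. ennreal (1 - lam * \<mu>) * ennreal ((norm (xk k \<omega> - xh \<omega>))\<^sup>2)
                     + ennreal (8 * lam\<^sup>2 * L\<^sup>2) * ennreal ((norm (xk 0 \<omega> - xh \<omega>))\<^sup>2) \<partial>samples)"
  proof (rule nn_integral_mono)
    fix \<omega>
    have "(\<integral>\<^sup>+z. \<phi> \<omega> z \<partial>P0) \<le> ennreal ((1 - lam * \<mu>) * (norm (xk k \<omega> - xh \<omega>))\<^sup>2
        + 8 * lam\<^sup>2 * L\<^sup>2 * (norm (xb \<omega> - xh \<omega>))\<^sup>2)"
      unfolding \<phi>_def
      by (rule expected_sq_vr_step_le[OF P0 gf_lip gf_meas gf_sq gf_unbiased F_smooth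
            strongly_convex_gradient_strongly_monotone[OF F_sc F_deriv] lam_pos L_nonneg lam_small])
    then show "(\<integral>\<^sup>+z. \<phi> \<omega> z \<partial>P0) \<le> ennreal (1 - lam * \<mu>) * ennreal ((norm (xk k \<omega> - xh \<omega>))\<^sup>2)
        + ennreal (8 * lam\<^sup>2 * L\<^sup>2) * ennreal ((norm (xk 0 \<omega> - xh \<omega>))\<^sup>2)"
      using step_factor_nonneg by (simp add: xk_def ennreal_plus ennreal_mult)
  qed
  also have "\<dots> = ennreal (1 - lam * \<mu>) * d k + ennreal (8 * lam\<^sup>2 * L\<^sup>2) * d 0"
  proof -
    have "(\<lambda>\<omega>. ennreal ((norm (xk j \<omega> - xh \<omega>))\<^sup>2)) \<in> borel_measurable samples" for j
      using xk_meas[of j] xh_meas by measurable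
    then show ?thesis
      unfolding d_def xh_def[symmetric] xk_def[symmetric] by (simp add: nn_integral_add nn_integral_cmult)
  qed
  finally show ?thesis .
qed

lemma vrpg_epoch_contraction:
  assumes xb_meas: "xb \<in> borel_measurable samples"
    and xb_prefix: "\<And>\<omega> \<omega>'. (\<And>i. i < vrpg_j T K m + T + 1 \<Longrightarrow> \<omega> i = \<omega>' i) \<Longrightarrow> xb \<omega> = xb \<omega>'"
  defines "d \<equiv> \<lambda>k. \<integral>\<^sup>+\<omega>. ennreal ((norm (vrpg_inner gf R lam T K m \<omega> (xb \<omega>) k
      - composite_argmin F R (vrpg_gbar gf T K m \<omega> (xb \<omega>) - gradF (xb \<omega>))))\<^sup>2) \<partial>samples"
  shows "d k \<le> ennreal ((1 - lam * \<mu>) ^ k + 8 * lam\<^sup>2 * L\<^sup>2 * (\<Sum>i<k. (1 - lam * \<mu>) ^ i)) * d 0"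
proof (rule ennreal_affine_recurrence_bound[OF step_factor_nonneg])
  show "d (Suc k) \<le> ennreal (1 - lam * \<mu>) * d k + ennreal (8 * lam\<^sup>2 * L\<^sup>2) * d 0" for k
    unfolding d_def by (rule vrpg_inner_step_mean_sq[OF xb_meas xb_prefix])
qed simp

end

theorem lemma1:
  fixes P0 :: "'z measure"
    and f :: "'v::euclidean_space \<Rightarrow> 'z \<Rightarrow> real"
    and gf :: "'v \<Rightarrow> 'z \<Rightarrow> 'v"
    and F :: "'v \<Rightarrow> real" and gradF :: "'v \<Rightarrow> 'v"
    and R :: "'v \<Rightarrow> ereal"
    and \<mu> L lam :: real and M K T :: nat and x1 :: 'v and m :: nat
  assumes P0: "prob_space P0"
    and f_meas: "\<And>x. f x \<in> borel_measurable P0"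
    and f_int: "\<And>x. integrable P0 (f x)"
    and F_def: "\<And>x. F x = (\<integral>z. f x z \<partial>P0)"
    and mu_pos: "0 < \<mu>" and mu_L: "\<mu> \<le> L"
    and F_deriv: "\<And>x. (F has_derivative (\<lambda>h. gradF x \<bullet> h)) (at x)"
    and F_sc: "strongly_convex \<mu> F"
    and F_smooth: "\<And>x y. norm (gradF x - gradF y) \<le> L * norm (x - y)"
    and R_proper: "proper_fun R" and R_convex: "convex_ereal_fun R" and R_lsc: "lsc_fun R"
    and f_deriv: "\<And>x z. z \<in> space P0 \<Longrightarrow> ((\<lambda>y. f y z) has_derivative (\<lambda>h. gf x z \<bullet> h)) (at x)"
    and gf_cont: "\<And>z. z \<in> space P0 \<Longrightarrow> continuous_on UNIV (\<lambda>x. gf x z)"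
    and gf_lip: "\<And>x y z. z \<in> space P0 \<Longrightarrow> norm (gf x z - gf y z) \<le> L * norm (x - y)"
    and gf_meas: "\<And>x. gf x \<in> borel_measurable P0"
    and gf_sq: "\<And>x. integrable P0 (\<lambda>z. (norm (gf x z))\<^sup>2)"
    and gf_unbiased: "\<And>x. (\<integral>z. gf x z \<partial>P0) = gradF x"
    and lam_def: "lam = \<mu> / (6 * 8\<^sup>2 * L\<^sup>2)"
    and K_def: "real K = ln 120 / ln (1 / (1 - \<mu>\<^sup>2 / (6 * 8\<^sup>2 * L\<^sup>2)))"
    and K_pos: "0 < K" and T_pos: "0 < T"
    and m: "1 \<le> m" "m \<le> M"
  shows
    "(\<integral>\<^sup>+\<omega>. ennreal ((norm (vrpg_xbar gf R lam T K x1 \<omega> (Suc m)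
          - argmin_e (\<lambda>x. ereal (F x + x \<bullet> (vrpg_gbar gf T K m \<omega> (vrpg_xbar gf R lam T K x1 \<omega> m)
                                          - gradF (vrpg_xbar gf R lam T K x1 \<omega> m))) + R x)))\<^sup>2)
        \<partial>(PiM UNIV (\<lambda>_::nat. P0)))
     \<le> (\<integral>\<^sup>+\<omega>. ennreal ((norm (vrpg_xbar gf R lam T K x1 \<omega> m
          - argmin_e (\<lambda>x. ereal (F x + x \<bullet> (vrpg_gbar gf T K m \<omega> (vrpg_xbar gf R lam T K x1 \<omega> m)
                                          - gradF (vrpg_xbar gf R lam T K x1 \<omega> m))) + R x)))\<^sup>2)
        \<partial>(PiM UNIV (\<lambda>_::nat. P0))) / 20"
proof -
  have L_pos: "0 < L" using mu_pos mu_L by simp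
  interpret vrpg_problem P0 gf F gradF R \<mu> L lam
    by (rule vrpg_problem.intro[OF P0 mu_pos mu_L F_deriv F_sc F_smooth R_proper R_convex R_lsc
          gf_cont gf_lip gf_meas gf_sq gf_unbiased]) (use mu_pos L_pos in \<open>simp_all add: lam_def\<close>)
  let ?d = "\<lambda>k. \<integral>\<^sup>+\<omega>. ennreal ((norm (vrpg_inner gf R lam T K m \<omega> (vrpg_xbar gf R lam T K x1 \<omega> m) k
      - composite_argmin F R (vrpg_gbar gf T K m \<omega> (vrpg_xbar gf R lam T K x1 \<omega> m)
                              - gradF (vrpg_xbar gf R lam T K x1 \<omega> m))))\<^sup>2) \<partial>samples"
  have "?d K \<le> ennreal ((1 - lam * \<mu>) ^ K + 8 * lam\<^sup>2 * L\<^sup>2 * (\<Sum>i<K. (1 - lam * \<mu>) ^ i)) * ?d 0"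
    by (rule vrpg_epoch_contraction[OF borel_measurable_vrpg_xbar vrpg_xbar_prefix]) simp
  also have "\<dots> \<le> ennreal (1 / 20) * ?d 0"
    using vrpg_tuning_bound[OF mu_pos mu_L lam_def K_def] by (intro mult_right_mono ennreal_leI) simp_all
  also have "\<dots> = ?d 0 / 20"
    by (subst mult.commute) (simp add: divide_ennreal[symmetric] ennreal_times_divide)
  finally show ?thesis using m(1) by (simp add: composite_argmin_def)
qed

end
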